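(* Let $\mathcal{C}$ be a pre-Hilbert $*$-category and let $(s_k\colon A_k\to X)_{k=1}^n$ be a split wide cospan in $\mathcal{C}$. Then the equations \[ t_1=s_1, \qquad t_{m+1} = s_{m+1} - \sum_{k=1}^m t_k (t_k^* t_k)^{-1} t_k^* s_{m+1} \] recursively define an orthogonal wide cospan $(t_k\colon A_k\to X)_{k=1}^n$ of closed monomorphisms such that $t_1\cup t_2\cup\dots\cup t_m = s_1\cup s_2\cup\dots\cup s_m$ (as subobjects of $X$) for each $m\in\{1,\dots,n\}$.
   Context: A $*$-category is a category with a choice of $f^*\colon Y\to X$ for each $f\colon X\to Y$ such that $1^*=1$, $(gf)^*=f^*g^*$, $(f^* )^*=f$. A morphism $f$ is an isometry if $f^*f=1$. An orthonormal biproduct is a biproduct $(X,s_1,r_1,s_2,r_2)$ with $r_k=s_k^*$. A pre-Hilbert $*$-category is a $*$-category with (R1) a zero object, (R2) orthonormal biproducts of all pairs of objects, (R3) an isometric kernel (isometric equaliser with the zero morphism) for every morphism, and (R4) every diagonal $\Delta\colon X\to X\oplus X$ a kernel of some morphism. A pre-Hilbert $*$-category is additive (enriched in abelian groups via its biproducts), which gives the subtraction and sums used. A closed monomorphism is a morphism $f$ with $f^*f$ invertible. A wide cospan $(s_k\colon A_k\to X)_{k=1}^n$ is a finite family of morphisms with common codomain; a retraction of it is a family $(r_k\colon X\to A_k)_{k=1}^n$ with $r_ks_j = 1$ if $j=k$ and $0$ otherwise; the cospan is split if it has a retraction. It is orthogonal if $s_j^*s_k=0$ for all $j\neq k$. The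 union of subobjects is their supremum in the poset of subobjects of $X$; the union of (subobjects represented by) the legs of a split cospan exists and is represented by $\begin{bmatrix}s_1&\cdots&s_n\end{bmatrix}\colon A_1\oplus\dots\oplus A_n\to X$. *)

theory Defs
  imports Main
begin

text \<open>A category is given by a set of objects, a set of arrows, source and target maps,
a composition (comp g f = g after f, meaningful when tgt f = src g), identities and
a dagger operation star.\<close>

record ('o, 'm) starcat =
  Obj  :: "'o set"
  Arr  :: "'m set"
  src  :: "'m \<Rightarrow> 'o"
  tgt  :: "'m \<Rightarrow> 'o"
  comp :: "'m \<Rightarrow> 'm \<Rightarrow> 'm"
  idm  :: "'o \<Rightarrow> 'm"
  star :: "'m \<Rightarrow> 'm"

definition hom :: "('o,'m) starcat \<Rightarrow> 'o \<Rightarrow> 'o \<Rightarrow> 'm set" where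
  "hom C X Y = {f \<in> Arr C. src C f = X \<and> tgt C f = Y}"

definition star_category :: "('o,'m) starcat \<Rightarrow> bool" where
  "star_category C \<longleftrightarrow>
     (\<forall>f\<in>Arr C. src C f \<in> Obj C \<and> tgt C f \<in> Obj C) \<and>
     (\<forall>X\<in>Obj C. idm C X \<in> hom C X X) \<and>
     (\<forall>f\<in>Arr C. \<forall>g\<in>Arr C. tgt C f = src C g \<longrightarrow>
        comp C g f \<in> hom C (src C f) (tgt C g)) \<and>
     (\<forall>f\<in>Arr C. \<forall>g\<in>Arr C. \<forall>h\<in>Arr C. tgt C f = src C g \<and> tgt C g = src C h \<longrightarrow>
        comp C h (comp C g f) = comp C (comp C h g) f) \<and>
     (\<forall>f\<in>Arr C. comp C f (idm C (src C f)) = f \<and> comp C (idm C (tgt C f)) f = f) \<and>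
     (\<forall>f\<in>Arr C. star C f \<in> hom C (tgt C f) (src C f)) \<and>
     (\<forall>X\<in>Obj C. star C (idm C X) = idm C X) \<and>
     (\<forall>f\<in>Arr C. \<forall>g\<in>Arr C. tgt C f = src C g \<longrightarrow>
        star C (comp C g f) = comp C (star C f) (star C g)) \<and>
     (\<forall>f\<in>Arr C. star C (star C f) = f)"

definition zero_object :: "('o,'m) starcat \<Rightarrow> 'o \<Rightarrow> bool" where
  "zero_object C Z \<longleftrightarrow> Z \<in> Obj C \<and>
     (\<forall>X\<in>Obj C. (\<exists>!f. f \<in> hom C X Z) \<and> (\<exists>!f. f \<in> hom C Z X))"

definition zm :: "('o,'m) starcat \<Rightarrow> 'o \<Rightarrow> 'o \<Rightarrow> 'm" where
  "zm C X Y = (SOME f. f \<in> hom C X Y \<and>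
     (\<exists>Z g h. zero_object C Z \<and> g \<in> hom C X Z \<and> h \<in> hom C Z Y \<and> f = comp C h g))"

definition invertible :: "('o,'m) starcat \<Rightarrow> 'm \<Rightarrow> bool" where
  "invertible C f \<longleftrightarrow> f \<in> Arr C \<and> (\<exists>g\<in>hom C (tgt C f) (src C f).
     comp C g f = idm C (src C f) \<and> comp C f g = idm C (tgt C f))"

definition inv_mor :: "('o,'m) starcat \<Rightarrow> 'm \<Rightarrow> 'm" where
  "inv_mor C f = (THE g. g \<in> hom C (tgt C f) (src C f) \<and>
     comp C g f = idm C (src C f) \<and> comp C f g = idm C (tgt C f))"

definition isometry :: "('o,'m) starcat \<Rightarrow> 'm \<Rightarrow> bool" where
  "isometry C f \<longleftrightarrow> f \<in> Arr C \<and> comp C (star C f) f = idm C (src C f)"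

definition mono :: "('o,'m) starcat \<Rightarrow> 'm \<Rightarrow> bool" where
  "mono C f \<longleftrightarrow> f \<in> Arr C \<and> (\<forall>g\<in>Arr C. \<forall>h\<in>Arr C.
     tgt C g = src C f \<and> tgt C h = src C f \<and> src C g = src C h \<and> comp C f g = comp C f h
     \<longrightarrow> g = h)"

definition closed_mono :: "('o,'m) starcat \<Rightarrow> 'm \<Rightarrow> bool" where
  "closed_mono C f \<longleftrightarrow> f \<in> Arr C \<and> invertible C (comp C (star C f) f)"

definition biproduct :: "('o,'m) starcat \<Rightarrow> 'o \<Rightarrow> 'o \<Rightarrow> 'o \<Rightarrow> 'm \<Rightarrow> 'm \<Rightarrow> 'm \<Rightarrow> 'm \<Rightarrow> bool" where
  "biproduct C A B S s1 r1 s2 r2 \<longleftrightarrow>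
     S \<in> Obj C \<and>
     s1 \<in> hom C A S \<and> r1 \<in> hom C S A \<and> s2 \<in> hom C B S \<and> r2 \<in> hom C S B \<and>
     comp C r1 s1 = idm C A \<and> comp C r2 s2 = idm C B \<and>
     comp C r2 s1 = zm C A B \<and> comp C r1 s2 = zm C B A \<and>
     (\<forall>Y\<in>Obj C. \<forall>f\<in>hom C Y A. \<forall>g\<in>hom C Y B.
        \<exists>!h. h \<in> hom C Y S \<and> comp C r1 h = f \<and> comp C r2 h = g) \<and>
     (\<forall>Y\<in>Obj C. \<forall>f\<in>hom C A Y. \<forall>g\<in>hom C B Y.
        \<exists>!h. h \<in> hom C S Y \<and> comp C h s1 = f \<and> comp C h s2 = g)"

definition orthonormal_biproduct :: "('o,'m) starcat \<Rightarrow> 'o \<Rightarrow> 'o \<Rightarrow> 'o \<Rightarrow> 'm \<Rightarrow> 'm \<Rightarrow> bool" where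
  "orthonormal_biproduct C A B S s1 s2 \<longleftrightarrow>
     biproduct C A B S s1 (star C s1) s2 (star C s2)"

definition kernel :: "('o,'m) starcat \<Rightarrow> 'm \<Rightarrow> 'm \<Rightarrow> bool" where
  "kernel C f k \<longleftrightarrow> f \<in> Arr C \<and> k \<in> Arr C \<and> tgt C k = src C f \<and>
     comp C f k = zm C (src C k) (tgt C f) \<and>
     (\<forall>g\<in>Arr C. tgt C g = src C f \<and> comp C f g = zm C (src C g) (tgt C f) \<longrightarrow>
        (\<exists>!h. h \<in> hom C (src C g) (src C k) \<and> comp C k h = g))"

definition pre_hilbert :: "('o,'m) starcat \<Rightarrow> bool" where
  "pre_hilbert C \<longleftrightarrow> star_category C \<and>
     \<comment> \<open>(R1)\<close> (\<exists>Z. zero_object C Z) \<and>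
     \<comment> \<open>(R2)\<close> (\<forall>A\<in>Obj C. \<forall>B\<in>Obj C. \<exists>S s1 s2. orthonormal_biproduct C A B S s1 s2) \<and>
     \<comment> \<open>(R3)\<close> (\<forall>f\<in>Arr C. \<exists>k. kernel C f k \<and> isometry C k) \<and>
     \<comment> \<open>(R4)\<close> (\<forall>X\<in>Obj C. \<forall>S s1 s2 d. orthonormal_biproduct C X X S s1 s2 \<and>
          d \<in> hom C X S \<and> comp C (star C s1) d = idm C X \<and> comp C (star C s2) d = idm C X
          \<longrightarrow> (\<exists>f. kernel C f d))"

definition add_mor :: "('o,'m) starcat \<Rightarrow> 'm \<Rightarrow> 'm \<Rightarrow> 'm" where
  "add_mor C f g =
    (let X = src C f; Y = tgt C f;
         (S, s1, r1, s2, r2) = (SOME (S, s1, r1, s2, r2). biproduct C Y Y S s1 r1 s2 r2);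
         p = (THE p. p \<in> hom C X S \<and> comp C r1 p = f \<and> comp C r2 p = g);
         c = (THE c. c \<in> hom C S Y \<and> comp C c s1 = idm C Y \<and> comp C c s2 = idm C Y)
     in comp C c p)"

definition sub_mor :: "('o,'m) starcat \<Rightarrow> 'm \<Rightarrow> 'm \<Rightarrow> 'm" where
  "sub_mor C f g = (THE h. h \<in> hom C (src C f) (tgt C f) \<and> add_mor C h g = f)"

definition sum_mor :: "('o,'m) starcat \<Rightarrow> 'o \<Rightarrow> 'o \<Rightarrow> 'm list \<Rightarrow> 'm" where
  "sum_mor C X Y fs = foldr (add_mor C) fs (zm C X Y)"

definition proj_mor :: "('o,'m) starcat \<Rightarrow> 'm \<Rightarrow> 'm" where
  "proj_mor C t = comp C t (comp C (inv_mor C (comp C (star C t) t)) (star C t))"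

fun gs_list :: "('o,'m) starcat \<Rightarrow> (nat \<Rightarrow> 'm) \<Rightarrow> nat \<Rightarrow> 'm list" where
  "gs_list C s 0 = [s 0]"
| "gs_list C s (Suc m) =
     (let ts = gs_list C s m;
          x = s (Suc m)
      in ts @ [sub_mor C x (sum_mor C (src C x) (tgt C x)
                  (map (\<lambda>t. comp C (proj_mor C t) x) ts))])"

text \<open>gram_schmidt C s k is t_{k+1} in the paper's 1-based numbering.\<close>
definition gram_schmidt :: "('o,'m) starcat \<Rightarrow> (nat \<Rightarrow> 'm) \<Rightarrow> nat \<Rightarrow> 'm" where
  "gram_schmidt C s k = last (gs_list C s k)"

definition wide_cospan :: "('o,'m) starcat \<Rightarrow> nat \<Rightarrow> (nat \<Rightarrow> 'o) \<Rightarrow> 'o \<Rightarrow> (nat \<Rightarrow> 'm) \<Rightarrow> bool" where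
  "wide_cospan C n A X s \<longleftrightarrow> (\<forall>k<n. s k \<in> hom C (A k) X)"

definition split_cospan :: "('o,'m) starcat \<Rightarrow> nat \<Rightarrow> (nat \<Rightarrow> 'o) \<Rightarrow> 'o \<Rightarrow> (nat \<Rightarrow> 'm) \<Rightarrow> bool" where
  "split_cospan C n A X s \<longleftrightarrow> wide_cospan C n A X s \<and>
     (\<exists>r. (\<forall>k<n. r k \<in> hom C X (A k)) \<and>
          (\<forall>k<n. \<forall>j<n. comp C (r k) (s j) = (if j = k then idm C (A k) else zm C (A j) (A k))))"

definition orthogonal_cospan :: "('o,'m) starcat \<Rightarrow> nat \<Rightarrow> (nat \<Rightarrow> 'o) \<Rightarrow> 'o \<Rightarrow> (nat \<Rightarrow> 'm) \<Rightarrow> bool" where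
  "orthogonal_cospan C n A X s \<longleftrightarrow> wide_cospan C n A X s \<and>
     (\<forall>j<n. \<forall>k<n. j \<noteq> k \<longrightarrow> comp C (star C (s j)) (s k) = zm C (A k) (A j))"

definition subobj_le :: "('o,'m) starcat \<Rightarrow> 'm \<Rightarrow> 'm \<Rightarrow> bool" where
  "subobj_le C f g \<longleftrightarrow> tgt C f = tgt C g \<and> (\<exists>h\<in>hom C (src C f) (src C g). comp C g h = f)"

definition is_union :: "('o,'m) starcat \<Rightarrow> 'o \<Rightarrow> nat \<Rightarrow> (nat \<Rightarrow> 'm) \<Rightarrow> 'm \<Rightarrow> bool" where
  "is_union C X m F u \<longleftrightarrow> mono C u \<and> tgt C u = X \<and> (\<forall>k<m. subobj_le C (F k) u) \<and>
     (\<forall>v. mono C v \<and> tgt C v = X \<and> (\<forall>k<m. subobj_le C (F k) v) \<longrightarrow> subobj_le C u v)"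

end

theory Submission
  imports Defs
begin

text \<open>The hom-sets of a pre-Hilbert \<open>*\<close>-category are abelian groups: biproducts give a
  commutative monoid structure by the Eckmann--Hilton argument, and a negative of the identity
  is built from the isometric kernel of the codiagonal \<open>X \<oplus> X \<rightarrow> X\<close>, using that the
  diagonal is a kernel. So the recursion makes sense, and by induction on \<open>m\<close> the retraction
  \<open>r\<close> of the split cospan satisfies \<open>r\<^sub>j t\<^sub>m = \<delta>\<^sub>j\<^sub>m\<close> for \<open>j \<ge> m\<close>, while
  \<open>t\<^sub>k\<^sup>* t\<^sub>m = t\<^sub>k\<^sup>* s\<^sub>m - t\<^sub>k\<^sup>* s\<^sub>m = 0\<close> for \<open>k < m\<close>. Thus \<open>t\<^sub>m\<close> is a split
  monomorphism, hence closed (it factors as an isometry followed by an isomorphism), and the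
  family is orthogonal. The union of an orthogonal family of closed monomorphisms is the
  isometric kernel of \<open>1 - \<Sum>\<^sub>k t\<^sub>k (t\<^sub>k\<^sup>* t\<^sub>k)\<^sup>-\<^sup>1 t\<^sub>k\<^sup>*\<close>. Finally, \<open>s\<^sub>m - t\<^sub>m\<close>
  factors through \<open>t\<^sub>1, \<dots>, t\<^sub>m\<^sub>-\<^sub>1\<close>, so a subobject contains \<open>s\<^sub>1, \<dots>, s\<^sub>m\<close> iff
  it contains \<open>t\<^sub>1, \<dots>, t\<^sub>m\<close>, and the two unions coincide.\<close>

section \<open>Star categories\<close>

locale star_cat =
  fixes C :: "('o,'m) starcat"
  assumes star_category: "star_category C"
begin

abbreviation cp (infixr "\<cdot>" 75) where "g \<cdot> f \<equiv> comp C g f"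
abbreviation arr where "arr f \<equiv> f \<in> Arr C"
abbreviation obj where "obj X \<equiv> X \<in> Obj C"
abbreviation dom where "dom f \<equiv> src C f"
abbreviation cod where "cod f \<equiv> tgt C f"
abbreviation dagger ("_\<^sup>\<dagger>" [1000] 1000) where "f\<^sup>\<dagger> \<equiv> star C f"
abbreviation one where "one X \<equiv> idm C X"

lemma obj_dom_cod[simp]: "arr f \<Longrightarrow> obj (dom f)" "arr f \<Longrightarrow> obj (cod f)"
  using star_category unfolding star_category_def by auto

lemma ident_arr[simp]:
  "obj X \<Longrightarrow> arr (one X)" "obj X \<Longrightarrow> dom (one X) = X" "obj X \<Longrightarrow> cod (one X) = X"
  using star_category unfolding star_category_def hom_def by auto

lemma comp_arr[simp]: "arr f \<Longrightarrow> arr g \<Longrightarrow> cod f = dom g \<Longrightarrow> arr (g \<cdot> f)"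
  "arr f \<Longrightarrow> arr g \<Longrightarrow> cod f = dom g \<Longrightarrow> dom (g \<cdot> f) = dom f"
  "arr f \<Longrightarrow> arr g \<Longrightarrow> cod f = dom g \<Longrightarrow> cod (g \<cdot> f) = cod g"
  using star_category unfolding star_category_def hom_def by auto

lemma comp_assoc: "arr f \<Longrightarrow> arr g \<Longrightarrow> arr h \<Longrightarrow> cod f = dom g \<Longrightarrow> cod g = dom h \<Longrightarrow>
   (h \<cdot> g) \<cdot> f = h \<cdot> (g \<cdot> f)"
  using star_category unfolding star_category_def by metis

lemma comp_ident_left[simp]: "arr f \<Longrightarrow> cod f = Y \<Longrightarrow> one Y \<cdot> f = f"
  and comp_ident_right[simp]: "arr f \<Longrightarrow> dom f = X \<Longrightarrow> f \<cdot> one X = f"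
  using star_category unfolding star_category_def by auto

lemma dagger_arr[simp]:
  "arr f \<Longrightarrow> arr (f\<^sup>\<dagger>)" "arr f \<Longrightarrow> dom (f\<^sup>\<dagger>) = cod f" "arr f \<Longrightarrow> cod (f\<^sup>\<dagger>) = dom f"
  using star_category unfolding star_category_def hom_def by auto

lemma dagger_ident[simp]: "obj X \<Longrightarrow> (one X)\<^sup>\<dagger> = one X"
  and dagger_dagger[simp]: "arr f \<Longrightarrow> (f\<^sup>\<dagger>)\<^sup>\<dagger> = f"
  using star_category unfolding star_category_def by auto

lemma dagger_comp[simp]: "arr f \<Longrightarrow> arr g \<Longrightarrow> cod f = dom g \<Longrightarrow> (g \<cdot> f)\<^sup>\<dagger> = f\<^sup>\<dagger> \<cdot> g\<^sup>\<dagger>"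
  using star_category unfolding star_category_def by auto

lemma hom_iff: "f \<in> hom C X Y \<longleftrightarrow> arr f \<and> dom f = X \<and> cod f = Y"
  by (simp add: hom_def)

lemma inv_mor_props:
  assumes "invertible C g"
  shows "arr (inv_mor C g)" "dom (inv_mor C g) = cod g" "cod (inv_mor C g) = dom g"
    "inv_mor C g \<cdot> g = one (dom g)" "g \<cdot> inv_mor C g = one (cod g)"
proof -
  obtain h where h: "h \<in> hom C (cod g) (dom g)" "h \<cdot> g = one (dom g)" "g \<cdot> h = one (cod g)" and g: "arr g"
    using assms unfolding invertible_def by blast
  have inverse_unique: "h' = h"
    if h': "h' \<in> hom C (cod g) (dom g) \<and> h' \<cdot> g = one (dom g) \<and> g \<cdot> h' = one (cod g)" for h'
  proof -
    have "h' = h' \<cdot> (g \<cdot> h)" using h h' by (simp add: hom_iff)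
    also have "\<dots> = (h' \<cdot> g) \<cdot> h"
      by (rule comp_assoc[symmetric]) (use h h' g in \<open>auto simp: hom_iff\<close>)
    also have "\<dots> = h" using h h' by (simp add: hom_iff)
    finally show ?thesis .
  qed
  have "inv_mor C g \<in> hom C (cod g) (dom g) \<and> inv_mor C g \<cdot> g = one (dom g) \<and> g \<cdot> inv_mor C g = one (cod g)"
    unfolding inv_mor_def by (rule theI[of _ h]) (use h inverse_unique in blast)+
  then show "arr (inv_mor C g)" "dom (inv_mor C g) = cod g" "cod (inv_mor C g) = dom g"
    "inv_mor C g \<cdot> g = one (dom g)" "g \<cdot> inv_mor C g = one (cod g)" by (auto simp: hom_iff)
qed

lemma isometryD: "isometry C k \<Longrightarrow> arr k" "isometry C k \<Longrightarrow> k\<^sup>\<dagger> \<cdot> k = one (dom k)"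
  unfolding isometry_def by auto

lemma isometry_cancel:
  assumes "isometry C k" "arr g" "arr h" "cod g = dom k" "cod h = dom k" "k \<cdot> g = k \<cdot> h"
  shows "g = h"
proof -
  note k = isometryD[OF assms(1)]
  have "g = (k\<^sup>\<dagger> \<cdot> k) \<cdot> g" using assms k by simp
  also have "\<dots> = k\<^sup>\<dagger> \<cdot> (k \<cdot> h)" using assms k(1) by (simp add: comp_assoc)
  also have "\<dots> = (k\<^sup>\<dagger> \<cdot> k) \<cdot> h" using assms(1-5) k(1) by (simp add: comp_assoc)
  also have "\<dots> = h" using assms k by simp
  finally show ?thesis .
qed

lemma isometry_mono: "isometry C k \<Longrightarrow> mono C k"
  unfolding mono_def using isometry_cancel isometryD by blast

lemma isometry_comp_iso_closed_mono:
  assumes i: "isometry C i" and h: "arr h" "cod h = dom i" and g: "arr g" "dom g = cod h" "cod g = dom h"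
    and gh: "g \<cdot> h = one (dom h)" and hg: "h \<cdot> g = one (cod h)"
  shows "closed_mono C (i \<cdot> h)"
proof -
  note i' = isometryD[OF i]
  have "(i \<cdot> h)\<^sup>\<dagger> \<cdot> (i \<cdot> h) = h\<^sup>\<dagger> \<cdot> (i\<^sup>\<dagger> \<cdot> (i \<cdot> h))" using i' h by (simp add: comp_assoc)
  also have "i\<^sup>\<dagger> \<cdot> (i \<cdot> h) = (i\<^sup>\<dagger> \<cdot> i) \<cdot> h" by (rule comp_assoc[symmetric]) (use i' h in auto)
  also have "\<dots> = h" using i' h by simp
  finally have hh: "(i \<cdot> h)\<^sup>\<dagger> \<cdot> (i \<cdot> h) = h\<^sup>\<dagger> \<cdot> h" .
  define w where "w = g \<cdot> g\<^sup>\<dagger>"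
  have w: "w \<in> hom C (dom h) (dom h)" unfolding w_def using g by (simp add: hom_iff)
  have "w \<cdot> (h\<^sup>\<dagger> \<cdot> h) = g \<cdot> ((h \<cdot> g)\<^sup>\<dagger> \<cdot> h)" unfolding w_def using g h by (simp add: comp_assoc)
  then have w1: "w \<cdot> (h\<^sup>\<dagger> \<cdot> h) = one (dom h)" using hg gh g h i' by simp
  have "(h\<^sup>\<dagger> \<cdot> h) \<cdot> w = h\<^sup>\<dagger> \<cdot> ((h \<cdot> g) \<cdot> g\<^sup>\<dagger>)" unfolding w_def using g h by (simp add: comp_assoc)
  also have "\<dots> = (g \<cdot> h)\<^sup>\<dagger>" using hg g h by simp
  finally have w2: "(h\<^sup>\<dagger> \<cdot> h) \<cdot> w = one (dom h)" using gh h by simp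
  have "invertible C (h\<^sup>\<dagger> \<cdot> h)"
    unfolding invertible_def using w w1 w2 h by auto
  then show ?thesis unfolding closed_mono_def hh using i' h by simp
qed

definition factors_through where
  "factors_through v g \<longleftrightarrow> (\<exists>h. arr h \<and> dom h = dom g \<and> cod h = dom v \<and> v \<cdot> h = g)"

lemma factors_throughI:
  "arr h \<Longrightarrow> dom h = dom g \<Longrightarrow> cod h = dom v \<Longrightarrow> v \<cdot> h = g \<Longrightarrow> factors_through v g"
  unfolding factors_through_def by blast

lemma factors_throughE:
  assumes "factors_through v g"
  obtains h where "arr h" "dom h = dom g" "cod h = dom v" "v \<cdot> h = g"
  using assms unfolding factors_through_def by blast

lemma factors_through_comp:
  assumes "arr v" "arr g" "arr k" "cod k = dom g" "cod g = cod v" and "factors_through v g"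
  shows "factors_through v (g \<cdot> k)"
proof -
  obtain h where h: "arr h" "dom h = dom g" "cod h = dom v" "v \<cdot> h = g"
    using assms(6) by (rule factors_throughE)
  have "v \<cdot> (h \<cdot> k) = g \<cdot> k" using assms(1-5) h by (simp add: comp_assoc[symmetric])
  then show ?thesis by (rule factors_throughI[rotated 3]) (use assms h in auto)
qed

lemma subobj_le_iff_factors_through: "subobj_le C f g \<longleftrightarrow> cod f = cod g \<and> factors_through g f"
  unfolding subobj_le_def factors_through_def hom_def by auto

definition pinv where "pinv t = inv_mor C (t\<^sup>\<dagger> \<cdot> t) \<cdot> t\<^sup>\<dagger>"

lemma pinv_props:
  assumes "closed_mono C t"
  shows "arr (pinv t)" "dom (pinv t) = cod t" "cod (pinv t) = dom t" "pinv t \<cdot> t = one (dom t)"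
proof -
  have t: "arr t" and i: "invertible C (t\<^sup>\<dagger> \<cdot> t)"
    using assms unfolding closed_mono_def by auto
  note v = inv_mor_props[OF i]
  show "arr (pinv t)" "dom (pinv t) = cod t" "cod (pinv t) = dom t"
    unfolding pinv_def using v t by auto
  show "pinv t \<cdot> t = one (dom t)"
    unfolding pinv_def using v t by (simp add: comp_assoc)
qed

lemma proj_mor_eq: "proj_mor C t = t \<cdot> pinv t"
  unfolding proj_mor_def pinv_def ..

lemma proj_mor_props:
  assumes "closed_mono C t"
  shows "arr (proj_mor C t)" "dom (proj_mor C t) = cod t" "cod (proj_mor C t) = cod t"
    "proj_mor C t \<cdot> t = t" "t\<^sup>\<dagger> \<cdot> proj_mor C t = t\<^sup>\<dagger>"
proof -
  have t: "arr t" and i: "invertible C (t\<^sup>\<dagger> \<cdot> t)"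
    using assms unfolding closed_mono_def by auto
  note p = pinv_props[OF assms] and v = inv_mor_props[OF i]
  show "arr (proj_mor C t)" "dom (proj_mor C t) = cod t" "cod (proj_mor C t) = cod t"
    unfolding proj_mor_eq using p t by auto
  show "proj_mor C t \<cdot> t = t"
    unfolding proj_mor_eq using p t by (simp add: comp_assoc)
  have "t\<^sup>\<dagger> \<cdot> proj_mor C t = ((t\<^sup>\<dagger> \<cdot> t) \<cdot> inv_mor C (t\<^sup>\<dagger> \<cdot> t)) \<cdot> t\<^sup>\<dagger>"
    unfolding proj_mor_def using v(1-3) t by (simp add: comp_assoc)
  also have "(t\<^sup>\<dagger> \<cdot> t) \<cdot> inv_mor C (t\<^sup>\<dagger> \<cdot> t) = one (dom t)" using v(5) t by simp
  also have "one (dom t) \<cdot> t\<^sup>\<dagger> = t\<^sup>\<dagger>" using t by simp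
  finally show "t\<^sup>\<dagger> \<cdot> proj_mor C t = t\<^sup>\<dagger>" .
qed

lemma is_unionI:
  assumes "mono C u" "cod u = X" "\<And>k. k < m \<Longrightarrow> cod (F k) = X"
    and "\<And>k. k < m \<Longrightarrow> factors_through u (F k)"
    and "\<And>v. arr v \<Longrightarrow> cod v = X \<Longrightarrow> (\<And>k. k < m \<Longrightarrow> factors_through v (F k)) \<Longrightarrow>
      factors_through v u"
  shows "is_union C X m F u"
  using assms unfolding is_union_def subobj_le_iff_factors_through mono_def by auto

lemma is_union_cong:
  assumes "\<And>k. k < m \<Longrightarrow> cod (F k) = X" "\<And>k. k < m \<Longrightarrow> cod (G k) = X"
    and "\<And>v. arr v \<Longrightarrow> cod v = X \<Longrightarrow>
      (\<forall>k<m. factors_through v (F k)) \<longleftrightarrow> (\<forall>k<m. factors_through v (G k))"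
  shows "is_union C X m F u \<longleftrightarrow> is_union C X m G u"
proof -
  have upper_bounds: "(\<forall>k<m. subobj_le C (F k) v) \<longleftrightarrow> (\<forall>k<m. subobj_le C (G k) v)"
    if "mono C v" "cod v = X" for v
  proof -
    have "arr v" using that(1) unfolding mono_def by blast
    then show ?thesis using assms that(2) unfolding subobj_le_iff_factors_through by auto
  qed
  show ?thesis
    unfolding is_union_def using upper_bounds by blast
qed

end

section \<open>Zero morphisms and biproducts\<close>

locale semiadditive_star_cat = star_cat +
  assumes zero_object_exists: "\<exists>Z. zero_object C Z"
    and orthonormal_biproducts: "\<forall>A\<in>Obj C. \<forall>B\<in>Obj C. \<exists>S s1 s2. orthonormal_biproduct C A B S s1 s2"
begin

abbreviation zr where "zr X Y \<equiv> zm C X Y"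

lemma zero_object_hom_unique:
  "zero_object C Z \<Longrightarrow> obj X \<Longrightarrow> f \<in> hom C X Z \<Longrightarrow> g \<in> hom C X Z \<Longrightarrow> f = g"
  "zero_object C Z \<Longrightarrow> obj X \<Longrightarrow> f \<in> hom C Z X \<Longrightarrow> g \<in> hom C Z X \<Longrightarrow> f = g"
  unfolding zero_object_def by blast+

lemma zero_object_hom_ex:
  "zero_object C Z \<Longrightarrow> obj X \<Longrightarrow> \<exists>f. f \<in> hom C X Z"
  "zero_object C Z \<Longrightarrow> obj X \<Longrightarrow> \<exists>f. f \<in> hom C Z X"
  unfolding zero_object_def by blast+

lemma comp_through_zero_objects_eq:
  assumes Z: "zero_object C Z" and Z': "zero_object C Z'"
    and g: "g \<in> hom C X Z" and h: "h \<in> hom C Z Y" and g': "g' \<in> hom C X Z'" and h': "h' \<in> hom C Z' Y"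
  shows "h \<cdot> g = h' \<cdot> g'"
proof -
  have "obj Z" using Z by (simp add: zero_object_def)
  then obtain \<phi> where \<phi>: "\<phi> \<in> hom C Z' Z"
    using zero_object_hom_ex(2)[OF Z'] by blast
  have X: "obj X" and Y: "obj Y" using g h by (auto simp: hom_iff)
  have "g = \<phi> \<cdot> g'"
    by (rule zero_object_hom_unique(1)[OF Z X g]) (use \<phi> g' in \<open>auto simp: hom_iff\<close>)
  then have "h \<cdot> g = (h \<cdot> \<phi>) \<cdot> g'"
    using \<phi> g' h by (simp add: comp_assoc hom_iff)
  also have "h \<cdot> \<phi> = h'"
    by (rule zero_object_hom_unique(2)[OF Z' Y]) (use \<phi> h h' in \<open>auto simp: hom_iff\<close>)
  finally show ?thesis .
qed

lemma zero_mor_eq_comp: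
  assumes Z: "zero_object C Z" and g: "g \<in> hom C X Z" and h: "h \<in> hom C Z Y"
  shows "zr X Y = h \<cdot> g"
proof -
  have "h \<cdot> g \<in> hom C X Y" using g h by (auto simp: hom_iff)
  then have "\<exists>f. f \<in> hom C X Y \<and>
      (\<exists>Z g h. zero_object C Z \<and> g \<in> hom C X Z \<and> h \<in> hom C Z Y \<and> f = h \<cdot> g)"
    using assms by blast
  from someI_ex[OF this] obtain Z' g' h'
    where "zero_object C Z'" "g' \<in> hom C X Z'" "h' \<in> hom C Z' Y" "zr X Y = h' \<cdot> g'"
    unfolding zm_def[symmetric] by blast
  then show ?thesis
    using comp_through_zero_objects_eq[OF Z _ g h] by metis
qed

lemma zero_mor_through_zero_object:
  assumes "obj X" "obj Y"
  obtains Z g h where "zero_object C Z" "g \<in> hom C X Z" "h \<in> hom C Z Y" "zr X Y = h \<cdot> g"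
proof -
  obtain Z where Z: "zero_object C Z" using zero_object_exists by blast
  then obtain g h where "g \<in> hom C X Z" "h \<in> hom C Z Y"
    using assms zero_object_hom_ex by metis
  then show ?thesis using Z that zero_mor_eq_comp by blast
qed

lemma zero_mor_hom:
  assumes "obj X" "obj Y"
  shows "zr X Y \<in> hom C X Y"
proof -
  obtain Z g h where "zero_object C Z" "g \<in> hom C X Z" "h \<in> hom C Z Y" "zr X Y = h \<cdot> g"
    using assms by (rule zero_mor_through_zero_object)
  then show ?thesis by (simp add: hom_iff)
qed

lemma zero_arr[simp]:
  "obj X \<Longrightarrow> obj Y \<Longrightarrow> arr (zr X Y)"
  "obj X \<Longrightarrow> obj Y \<Longrightarrow> dom (zr X Y) = X"
  "obj X \<Longrightarrow> obj Y \<Longrightarrow> cod (zr X Y) = Y"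
  using zero_mor_hom by (auto simp: hom_iff)

lemma comp_zero_right[simp]:
  assumes "arr f" "dom f = Y" "obj X"
  shows "f \<cdot> zr X Y = zr X (cod f)"
proof -
  obtain Z g h where Z: "zero_object C Z" "g \<in> hom C X Z" "h \<in> hom C Z Y" "zr X Y = h \<cdot> g"
    using assms obj_dom_cod by (metis zero_mor_through_zero_object)
  then have "f \<cdot> (h \<cdot> g) = (f \<cdot> h) \<cdot> g" using assms by (simp add: comp_assoc hom_iff)
  also have "\<dots> = zr X (cod f)" using Z assms by (intro zero_mor_eq_comp[symmetric]) (auto simp: hom_iff)
  finally show ?thesis using Z by simp
qed

lemma comp_zero_left[simp]:
  assumes "arr f" "cod f = X" "obj Y"
  shows "zr X Y \<cdot> f = zr (dom f) Y"
proof -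
  obtain Z g h where Z: "zero_object C Z" "g \<in> hom C X Z" "h \<in> hom C Z Y" "zr X Y = h \<cdot> g"
    using assms obj_dom_cod by (metis zero_mor_through_zero_object)
  then have "(h \<cdot> g) \<cdot> f = h \<cdot> (g \<cdot> f)" using assms by (simp add: comp_assoc hom_iff)
  also have "\<dots> = zr (dom f) Y" using Z assms by (intro zero_mor_eq_comp[symmetric]) (auto simp: hom_iff)
  finally show ?thesis using Z by simp
qed

lemma dagger_zero[simp]:
  assumes "obj X" "obj Y"
  shows "(zr X Y)\<^sup>\<dagger> = zr Y X"
proof -
  obtain Z g h where Z: "zero_object C Z" "g \<in> hom C X Z" "h \<in> hom C Z Y" "zr X Y = h \<cdot> g"
    using assms by (rule zero_mor_through_zero_object)
  then have "(h \<cdot> g)\<^sup>\<dagger> = g\<^sup>\<dagger> \<cdot> h\<^sup>\<dagger>" by (simp add: hom_iff)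
  also have "\<dots> = zr Y X" using Z by (intro zero_mor_eq_comp[symmetric]) (auto simp: hom_iff)
  finally show ?thesis using Z by simp
qed

definition pairing where
  "pairing S r1 r2 f g = (THE p. p \<in> hom C (dom f) S \<and> r1 \<cdot> p = f \<and> r2 \<cdot> p = g)"
definition copairing where
  "copairing S s1 s2 f g = (THE c. c \<in> hom C S (cod f) \<and> c \<cdot> s1 = f \<and> c \<cdot> s2 = g)"

context
  fixes A B S s1 r1 s2 r2
  assumes B: "biproduct C A B S s1 r1 s2 r2"
begin

lemma biproduct_arr: "arr s1" "arr s2" "arr r1" "arr r2" "dom s1 = A" "cod s1 = S" "dom s2 = B" "cod s2 = S"
  "dom r1 = S" "cod r1 = A" "dom r2 = S" "cod r2 = B" "obj A" "obj B" "obj S"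
proof -
  have "obj S \<and> s1 \<in> hom C A S \<and> r1 \<in> hom C S A \<and> s2 \<in> hom C B S \<and> r2 \<in> hom C S B"
    using B unfolding biproduct_def by (elim conjE) (intro conjI)
  then show "arr s1" "arr s2" "arr r1" "arr r2" "dom s1 = A" "cod s1 = S" "dom s2 = B" "cod s2 = S"
  "dom r1 = S" "cod r1 = A" "dom r2 = S" "cod r2 = B" "obj A" "obj B" "obj S"
    unfolding hom_def by (auto dest: obj_dom_cod)
qed

lemma biproduct_eqs: "r1 \<cdot> s1 = one A" "r2 \<cdot> s2 = one B" "r2 \<cdot> s1 = zr A B" "r1 \<cdot> s2 = zr B A"
proof -
  have "r1 \<cdot> s1 = one A \<and> r2 \<cdot> s2 = one B \<and> r2 \<cdot> s1 = zr A B \<and> r1 \<cdot> s2 = zr B A"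
    using B unfolding biproduct_def by (elim conjE) (intro conjI)
  then show "r1 \<cdot> s1 = one A" "r2 \<cdot> s2 = one B" "r2 \<cdot> s1 = zr A B" "r1 \<cdot> s2 = zr B A" by blast+
qed

lemma pairing_ex1:
  "obj Y \<Longrightarrow> f \<in> hom C Y A \<Longrightarrow> g \<in> hom C Y B \<Longrightarrow>
    \<exists>!h. h \<in> hom C Y S \<and> r1 \<cdot> h = f \<and> r2 \<cdot> h = g"
proof -
  assume a: "obj Y" "f \<in> hom C Y A" "g \<in> hom C Y B"
  have "\<forall>Y\<in>Obj C. \<forall>f\<in>hom C Y A. \<forall>g\<in>hom C Y B. \<exists>!h. h \<in> hom C Y S \<and> r1 \<cdot> h = f \<and> r2 \<cdot> h = g"
    using B unfolding biproduct_def by (elim conjE)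
  then show ?thesis using a by blast
qed
lemma copairing_ex1:
  "obj Y \<Longrightarrow> f \<in> hom C A Y \<Longrightarrow> g \<in> hom C B Y \<Longrightarrow>
    \<exists>!h. h \<in> hom C S Y \<and> h \<cdot> s1 = f \<and> h \<cdot> s2 = g"
proof -
  assume a: "obj Y" "f \<in> hom C A Y" "g \<in> hom C B Y"
  have "\<forall>Y\<in>Obj C. \<forall>f\<in>hom C A Y. \<forall>g\<in>hom C B Y. \<exists>!h. h \<in> hom C S Y \<and> h \<cdot> s1 = f \<and> h \<cdot> s2 = g"
    using B unfolding biproduct_def by (elim conjE)
  then show ?thesis using a by blast
qed

lemma pairing_props:
  assumes "arr f" "arr g" "dom g = dom f" "cod f = A" "cod g = B"
  shows "arr (pairing S r1 r2 f g)" "dom (pairing S r1 r2 f g) = dom f" "cod (pairing S r1 r2 f g) = S"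
    "r1 \<cdot> pairing S r1 r2 f g = f" "r2 \<cdot> pairing S r1 r2 f g = g"
proof -
  have e: "\<exists>!h. h \<in> hom C (dom f) S \<and> r1 \<cdot> h = f \<and> r2 \<cdot> h = g"
    using assms by (intro pairing_ex1) (auto simp: hom_def)
  have "pairing S r1 r2 f g \<in> hom C (dom f) S \<and>
      r1 \<cdot> pairing S r1 r2 f g = f \<and> r2 \<cdot> pairing S r1 r2 f g = g"
    unfolding pairing_def by (rule theI'[OF e])
  then show "arr (pairing S r1 r2 f g)" "dom (pairing S r1 r2 f g) = dom f" "cod (pairing S r1 r2 f g) = S"
    "r1 \<cdot> pairing S r1 r2 f g = f" "r2 \<cdot> pairing S r1 r2 f g = g" by (auto simp: hom_def)
qed

lemma biproduct_eq_by_projections: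
  assumes "arr p" "arr q" "cod p = S" "cod q = S" "dom p = dom q" "r1 \<cdot> p = r1 \<cdot> q" "r2 \<cdot> p = r2 \<cdot> q"
  shows "p = q"
proof -
  have e: "\<exists>!h. h \<in> hom C (dom p) S \<and> r1 \<cdot> h = r1 \<cdot> p \<and> r2 \<cdot> h = r2 \<cdot> p"
    using assms biproduct_arr by (intro pairing_ex1) (auto simp: hom_def)
  have P: "p \<in> hom C (dom p) S \<and> r1 \<cdot> p = r1 \<cdot> p \<and> r2 \<cdot> p = r2 \<cdot> p" using assms by (simp add: hom_def)
  have Q: "q \<in> hom C (dom p) S \<and> r1 \<cdot> q = r1 \<cdot> p \<and> r2 \<cdot> q = r2 \<cdot> p" using assms by (simp add: hom_def)
  show ?thesis using e P Q by blast
qed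

lemma pairing_unique:
  assumes "arr p" "cod p = S" "r1 \<cdot> p = f" "r2 \<cdot> p = g"
  shows "pairing S r1 r2 f g = p"
proof -
  have f: "arr (r1 \<cdot> p)" "dom (r1 \<cdot> p) = dom p" "cod (r1 \<cdot> p) = A"
    "arr (r2 \<cdot> p)" "dom (r2 \<cdot> p) = dom p" "cod (r2 \<cdot> p) = B"
    using assms(1,2) biproduct_arr by simp_all
  have "pairing S r1 r2 (r1 \<cdot> p) (r2 \<cdot> p) = p"
    by (rule biproduct_eq_by_projections) (use pairing_props[of "r1 \<cdot> p" "r2 \<cdot> p"] f assms(1,2) in simp_all)
  then show ?thesis using assms by simp
qed

lemma copairing_props:
  assumes "arr f" "arr g" "cod g = cod f" "dom f = A" "dom g = B"
  shows "arr (copairing S s1 s2 f g)" "dom (copairing S s1 s2 f g) = S" "cod (copairing S s1 s2 f g) = cod f"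
    "copairing S s1 s2 f g \<cdot> s1 = f" "copairing S s1 s2 f g \<cdot> s2 = g"
proof -
  have e: "\<exists>!h. h \<in> hom C S (cod f) \<and> h \<cdot> s1 = f \<and> h \<cdot> s2 = g"
    using assms by (intro copairing_ex1) (auto simp: hom_def)
  have "copairing S s1 s2 f g \<in> hom C S (cod f) \<and>
      copairing S s1 s2 f g \<cdot> s1 = f \<and> copairing S s1 s2 f g \<cdot> s2 = g"
    unfolding copairing_def by (rule theI'[OF e])
  then show "arr (copairing S s1 s2 f g)" "dom (copairing S s1 s2 f g) = S" "cod (copairing S s1 s2 f g) = cod f"
    "copairing S s1 s2 f g \<cdot> s1 = f" "copairing S s1 s2 f g \<cdot> s2 = g" by (auto simp: hom_def)
qed

lemma biproduct_eq_by_injections: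
  assumes "arr p" "arr q" "dom p = S" "dom q = S" "cod p = cod q" "p \<cdot> s1 = q \<cdot> s1" "p \<cdot> s2 = q \<cdot> s2"
  shows "p = q"
proof -
  have e: "\<exists>!h. h \<in> hom C S (cod p) \<and> h \<cdot> s1 = p \<cdot> s1 \<and> h \<cdot> s2 = p \<cdot> s2"
    using assms biproduct_arr by (intro copairing_ex1) (auto simp: hom_def)
  have P: "p \<in> hom C S (cod p) \<and> p \<cdot> s1 = p \<cdot> s1 \<and> p \<cdot> s2 = p \<cdot> s2" using assms by (simp add: hom_def)
  have Q: "q \<in> hom C S (cod p) \<and> q \<cdot> s1 = p \<cdot> s1 \<and> q \<cdot> s2 = p \<cdot> s2" using assms by (simp add: hom_def)
  show ?thesis using e P Q by blast
qed

lemma copairing_unique: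
  assumes "arr p" "dom p = S" "p \<cdot> s1 = f" "p \<cdot> s2 = g"
  shows "copairing S s1 s2 f g = p"
proof -
  have f: "arr (p \<cdot> s1)" "cod (p \<cdot> s1) = cod p" "dom (p \<cdot> s1) = A"
    "arr (p \<cdot> s2)" "cod (p \<cdot> s2) = cod p" "dom (p \<cdot> s2) = B"
    using assms(1,2) biproduct_arr by simp_all
  have "copairing S s1 s2 (p \<cdot> s1) (p \<cdot> s2) = p"
    by (rule biproduct_eq_by_injections) (use copairing_props[of "p \<cdot> s1" "p \<cdot> s2"] f assms(1,2) in simp_all)
  then show ?thesis using assms by simp
qed

end

definition plus_codiag where
  "plus_codiag S s1 r1 s2 r2 f g = copairing S s1 s2 (one (cod f)) (one (cod f)) \<cdot> pairing S r1 r2 f g"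
definition plus_diag where
  "plus_diag S s1 r1 s2 r2 f g = copairing S s1 s2 f g \<cdot> pairing S r1 r2 (one (dom f)) (one (dom f))"

section \<open>Addition of parallel morphisms\<close>

text \<open>Eckmann--Hilton: adding parallel morphisms through a biproduct of the codomain
  (\<open>+\<^sub>Y\<close>) and through a biproduct of the domain (\<open>+\<^sub>X\<close>) gives two operations with the
  common unit \<open>zr X Y\<close> that satisfy the interchange law; hence they coincide and are
  commutative and associative.\<close>

context
  fixes X Y SX x1 p1 x2 p2 SY y1 q1 y2 q2
  assumes BX: "biproduct C X X SX x1 p1 x2 p2" and BY: "biproduct C Y Y SY y1 q1 y2 q2"
begin

abbreviation plus_Y (infixl "+\<^sub>Y" 65) where "f +\<^sub>Y g \<equiv> plus_codiag SY y1 q1 y2 q2 f g"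
abbreviation plus_X (infixl "+\<^sub>X" 65) where "f +\<^sub>X g \<equiv> plus_diag SX x1 p1 x2 p2 f g"

lemma plus_arr:
  assumes "arr f" "arr g" "dom f = X" "dom g = X" "cod f = Y" "cod g = Y"
  shows "arr (f +\<^sub>Y g)" "dom (f +\<^sub>Y g) = X" "cod (f +\<^sub>Y g) = Y"
    "arr (f +\<^sub>X g)" "dom (f +\<^sub>X g) = X" "cod (f +\<^sub>X g) = Y"
  using assms biproduct_arr[OF BX] biproduct_arr[OF BY] pairing_props[OF BY, of f g]
    copairing_props[OF BY, of "one Y" "one Y"] pairing_props[OF BX, of "one X" "one X"]
    copairing_props[OF BX, of f g]
  unfolding plus_codiag_def plus_diag_def by auto

lemma plus_codiag_zero:
  assumes f: "arr f" "dom f = X" "cod f = Y"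
  shows "f +\<^sub>Y zr X Y = f" "zr X Y +\<^sub>Y f = f"
proof -
  note a = biproduct_arr[OF BY] biproduct_eqs[OF BY]
  have X: "obj X" using f by auto
  have "pairing SY q1 q2 f (zr X Y) = y1 \<cdot> f"
    by (rule pairing_unique[OF BY]) (use a f X in \<open>auto simp: comp_assoc[symmetric]\<close>)
  moreover have "pairing SY q1 q2 (zr X Y) f = y2 \<cdot> f"
    by (rule pairing_unique[OF BY]) (use a f X in \<open>auto simp: comp_assoc[symmetric]\<close>)
  ultimately show "f +\<^sub>Y zr X Y = f" "zr X Y +\<^sub>Y f = f"
    unfolding plus_codiag_def using a f X copairing_props[OF BY, of "one Y" "one Y"]
    by (auto simp: comp_assoc[symmetric])
qed

lemma plus_diag_zero:
  assumes f: "arr f" "dom f = X" "cod f = Y"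
  shows "f +\<^sub>X zr X Y = f" "zr X Y +\<^sub>X f = f"
proof -
  note a = biproduct_arr[OF BX] biproduct_eqs[OF BX]
  have Y: "obj Y" using f by auto
  have "copairing SX x1 x2 f (zr X Y) = f \<cdot> p1"
    by (rule copairing_unique[OF BX]) (use a f Y in \<open>auto simp: comp_assoc\<close>)
  moreover have "copairing SX x1 x2 (zr X Y) f = f \<cdot> p2"
    by (rule copairing_unique[OF BX]) (use a f Y in \<open>auto simp: comp_assoc\<close>)
  ultimately show "f +\<^sub>X zr X Y = f" "zr X Y +\<^sub>X f = f"
    unfolding plus_diag_def using a f Y pairing_props[OF BX, of "one X" "one X"]
    by (auto simp: comp_assoc)
qed

lemma plus_interchange:
  assumes h: "arr a" "dom a = X" "cod a = Y" "arr b" "dom b = X" "cod b = Y"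
     "arr c" "dom c = X" "cod c = Y" "arr d" "dom d = X" "cod d = Y"
  shows "(a +\<^sub>X b) +\<^sub>Y (c +\<^sub>X d) = (a +\<^sub>Y c) +\<^sub>X (b +\<^sub>Y d)"
proof -
  note ax = biproduct_arr[OF BX] biproduct_eqs[OF BX] and ay = biproduct_arr[OF BY] biproduct_eqs[OF BY]
  define cab where "cab = copairing SX x1 x2 a b"
  define ccd where "ccd = copairing SX x1 x2 c d"
  define M where "M = pairing SY q1 q2 cab ccd"
  define D where "D = pairing SX p1 p2 (one X) (one X)"
  define N where "N = copairing SY y1 y2 (one Y) (one Y)"
  have cab: "arr cab" "dom cab = SX" "cod cab = Y" "cab \<cdot> x1 = a" "cab \<cdot> x2 = b"
    using copairing_props[OF BX, of a b, folded cab_def] h ax by auto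
  have ccd: "arr ccd" "dom ccd = SX" "cod ccd = Y" "ccd \<cdot> x1 = c" "ccd \<cdot> x2 = d"
    using copairing_props[OF BX, of c d, folded ccd_def] h ax by auto
  have M: "arr M" "dom M = SX" "cod M = SY" "q1 \<cdot> M = cab" "q2 \<cdot> M = ccd"
    using pairing_props[OF BY, of cab ccd, folded M_def] cab ccd ay by auto
  have D: "arr D" "dom D = X" "cod D = SX"
    using pairing_props[OF BX, of "one X" "one X", folded D_def] ax by auto
  have N: "arr N" "dom N = SY" "cod N = Y" "N \<cdot> y1 = one Y" "N \<cdot> y2 = one Y"
    using copairing_props[OF BY, of "one Y" "one Y", folded N_def] ay by auto
  have "a +\<^sub>X b = cab \<cdot> D" "c +\<^sub>X d = ccd \<cdot> D"
    unfolding plus_diag_def cab_def ccd_def D_def using h by auto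
  moreover have "pairing SY q1 q2 (cab \<cdot> D) (ccd \<cdot> D) = M \<cdot> D"
    by (rule pairing_unique[OF BY]) (use M D ay in \<open>auto simp: comp_assoc[symmetric]\<close>)
  ultimately have lhs: "(a +\<^sub>X b) +\<^sub>Y (c +\<^sub>X d) = N \<cdot> (M \<cdot> D)"
    unfolding plus_codiag_def N_def using cab D by simp
  have "M \<cdot> x1 = pairing SY q1 q2 a c" "M \<cdot> x2 = pairing SY q1 q2 b d"
    by (rule pairing_unique[OF BY, symmetric];
        use M ax ay cab ccd in \<open>auto simp: comp_assoc[symmetric]\<close>)+
  then have "copairing SX x1 x2 (a +\<^sub>Y c) (b +\<^sub>Y d) = N \<cdot> M"
    by (intro copairing_unique[OF BX])
      (use M N ax ay h in \<open>auto simp: comp_assoc plus_codiag_def N_def\<close>)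
  moreover have "dom (a +\<^sub>Y c) = X" using plus_arr h by auto
  ultimately have rhs: "(a +\<^sub>Y c) +\<^sub>X (b +\<^sub>Y d) = (N \<cdot> M) \<cdot> D"
    unfolding plus_diag_def D_def by simp
  show ?thesis unfolding lhs rhs using M N D by (simp add: comp_assoc)
qed

lemma plus_codiag_eq_plus_diag:
  assumes "arr f" "dom f = X" "cod f = Y" "arr g" "dom g = X" "cod g = Y"
  shows "f +\<^sub>Y g = f +\<^sub>X g"
proof -
  have X: "obj X" "obj Y" using assms by auto
  have "f +\<^sub>Y g = (f +\<^sub>X zr X Y) +\<^sub>Y (zr X Y +\<^sub>X g)"
    using plus_diag_zero assms by simp
  also have "\<dots> = (f +\<^sub>Y zr X Y) +\<^sub>X (zr X Y +\<^sub>Y g)"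
    by (rule plus_interchange) (use assms X in auto)
  also have "\<dots> = f +\<^sub>X g" using plus_codiag_zero assms by simp
  finally show ?thesis .
qed

lemma plus_codiag_commute:
  assumes "arr f" "dom f = X" "cod f = Y" "arr g" "dom g = X" "cod g = Y"
  shows "f +\<^sub>Y g = g +\<^sub>Y f"
proof -
  have X: "obj X" "obj Y" using assms by auto
  have "f +\<^sub>Y g = (zr X Y +\<^sub>X f) +\<^sub>Y (g +\<^sub>X zr X Y)"
    using plus_diag_zero assms by simp
  also have "\<dots> = (zr X Y +\<^sub>Y g) +\<^sub>X (f +\<^sub>Y zr X Y)"
    by (rule plus_interchange) (use assms X in auto)
  also have "\<dots> = g +\<^sub>X f" using plus_codiag_zero assms by simp
  also have "\<dots> = g +\<^sub>Y f" using plus_codiag_eq_plus_diag assms by simp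
  finally show ?thesis .
qed

lemma plus_codiag_assoc:
  assumes "arr f" "dom f = X" "cod f = Y" "arr g" "dom g = X" "cod g = Y" "arr h" "dom h = X" "cod h = Y"
  shows "(f +\<^sub>Y g) +\<^sub>Y h = f +\<^sub>Y (g +\<^sub>Y h)"
proof -
  have X: "obj X" "obj Y" using assms by auto
  have "(f +\<^sub>Y g) +\<^sub>Y h = (f +\<^sub>X g) +\<^sub>Y (zr X Y +\<^sub>X h)"
    using plus_diag_zero plus_codiag_eq_plus_diag assms by simp
  also have "\<dots> = (f +\<^sub>Y zr X Y) +\<^sub>X (g +\<^sub>Y h)"
    by (rule plus_interchange) (use assms X in auto)
  also have "\<dots> = f +\<^sub>X (g +\<^sub>Y h)" using plus_codiag_zero assms by simp
  also have "\<dots> = f +\<^sub>Y (g +\<^sub>Y h)" using plus_codiag_eq_plus_diag plus_arr assms by simp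
  finally show ?thesis .
qed

end

abbreviation ad (infixl "\<oplus>" 65) where "f \<oplus> g \<equiv> add_mor C f g"

lemma orthonormal_biproduct_exists:
  assumes "obj A"
  shows "\<exists>S s1 s2. biproduct C A A S s1 (s1\<^sup>\<dagger>) s2 (s2\<^sup>\<dagger>)"
  using assms orthonormal_biproducts unfolding orthonormal_biproduct_def by blast

lemma add_mor_chosen:
  assumes Y: "obj (cod f)"
  shows "\<exists>S s1 r1 s2 r2. biproduct C (cod f) (cod f) S s1 r1 s2 r2 \<and>
    f \<oplus> g = plus_codiag S s1 r1 s2 r2 f g"
proof -
  define P where "P = (\<lambda>(S, s1, r1, s2, r2). biproduct C (cod f) (cod f) S s1 r1 s2 r2)"
  obtain S0 t1 t2 where "biproduct C (cod f) (cod f) S0 t1 (t1\<^sup>\<dagger>) t2 (t2\<^sup>\<dagger>)"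
    using orthonormal_biproduct_exists[OF Y] by blast
  then have ex: "\<exists>b. P b" unfolding P_def by (intro exI[of _ "(S0, t1, t1\<^sup>\<dagger>, t2, t2\<^sup>\<dagger>)"]) simp
  obtain S s1 r1 s2 r2 where b: "(SOME b. P b) = (S, s1, r1, s2, r2)" by (metis prod_cases5)
  have bp: "biproduct C (cod f) (cod f) S s1 r1 s2 r2" using someI_ex[OF ex] unfolding b by (simp add: P_def)
  have "f \<oplus> g = plus_codiag S s1 r1 s2 r2 f g"
    unfolding add_mor_def Let_def plus_codiag_def pairing_def copairing_def
    using b[unfolded P_def] Y by simp
  then show ?thesis using bp by blast
qed

lemma add_mor_eq_plus_codiag:
  assumes fg: "arr f" "arr g" "dom f = X" "dom g = X" "cod f = Y" "cod g = Y"
    and BY: "biproduct C Y Y S s1 r1 s2 r2"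
  shows "f \<oplus> g = plus_codiag S s1 r1 s2 r2 f g"
proof -
  obtain S' s1' r1' s2' r2' where BY': "biproduct C Y Y S' s1' r1' s2' r2'"
    and e: "f \<oplus> g = plus_codiag S' s1' r1' s2' r2' f g"
    using add_mor_chosen[of f g] fg by auto
  obtain SX x1 x2 where BX: "biproduct C X X SX x1 (x1\<^sup>\<dagger>) x2 (x2\<^sup>\<dagger>)"
    using orthonormal_biproduct_exists[of X] fg by auto
  show ?thesis
    unfolding e using plus_codiag_eq_plus_diag[OF BX BY' fg(1,3,5,2,4,6)]
      plus_codiag_eq_plus_diag[OF BX BY fg(1,3,5,2,4,6)] by simp
qed

lemma add_mor_eq_plus_diag:
  assumes fg: "arr f" "arr g" "dom f = X" "dom g = X" "cod f = Y" "cod g = Y"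
    and BX: "biproduct C X X S s1 r1 s2 r2"
  shows "f \<oplus> g = plus_diag S s1 r1 s2 r2 f g"
proof -
  obtain S' s1' r1' s2' r2' where BY': "biproduct C Y Y S' s1' r1' s2' r2'"
    and e: "f \<oplus> g = plus_codiag S' s1' r1' s2' r2' f g"
    using add_mor_chosen[of f g] fg by auto
  show ?thesis unfolding e using plus_codiag_eq_plus_diag[OF BX BY' fg(1,3,5,2,4,6)] by simp
qed

lemma add_arr:
  assumes fg: "arr f" "arr g" "dom f = X" "dom g = X" "cod f = Y" "cod g = Y"
  shows "arr (f \<oplus> g)" "dom (f \<oplus> g) = X" "cod (f \<oplus> g) = Y"
proof -
  obtain S s1 s2 where BY: "biproduct C Y Y S s1 (s1\<^sup>\<dagger>) s2 (s2\<^sup>\<dagger>)"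
    using orthonormal_biproduct_exists[of Y] fg by auto
  obtain SX x1 x2 where BX: "biproduct C X X SX x1 (x1\<^sup>\<dagger>) x2 (x2\<^sup>\<dagger>)"
    using orthonormal_biproduct_exists[of X] fg by auto
  show "arr (f \<oplus> g)" "dom (f \<oplus> g) = X" "cod (f \<oplus> g) = Y"
    using plus_arr[OF BX BY fg] add_mor_eq_plus_codiag[OF fg BY] by auto
qed

lemma add_commute:
  assumes fg: "arr f" "arr g" "dom f = X" "dom g = X" "cod f = Y" "cod g = Y"
  shows "f \<oplus> g = g \<oplus> f"
proof -
  obtain S s1 s2 where BY: "biproduct C Y Y S s1 (s1\<^sup>\<dagger>) s2 (s2\<^sup>\<dagger>)"
    using orthonormal_biproduct_exists[of Y] fg by auto
  obtain SX x1 x2 where BX: "biproduct C X X SX x1 (x1\<^sup>\<dagger>) x2 (x2\<^sup>\<dagger>)"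
    using orthonormal_biproduct_exists[of X] fg by auto
  show ?thesis
    using add_mor_eq_plus_codiag[OF fg BY] plus_codiag_commute[OF BX BY fg(1,3,5,2,4,6)]
      add_mor_eq_plus_codiag[OF fg(2,1,4,3,6,5) BY] by simp
qed

lemma add_arr_simp[simp]:
  "arr f \<Longrightarrow> arr g \<Longrightarrow> dom g = dom f \<Longrightarrow> cod g = cod f \<Longrightarrow> arr (f \<oplus> g)"
  "arr f \<Longrightarrow> arr g \<Longrightarrow> dom g = dom f \<Longrightarrow> cod g = cod f \<Longrightarrow> dom (f \<oplus> g) = dom f"
  "arr f \<Longrightarrow> arr g \<Longrightarrow> dom g = dom f \<Longrightarrow> cod g = cod f \<Longrightarrow> cod (f \<oplus> g) = cod f"
  using add_arr[of f g "dom f" "cod f"] by auto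

lemma add_assoc:
  assumes "arr f" "arr g" "arr h" "dom g = dom f" "cod g = cod f" "dom h = dom f" "cod h = cod f"
  shows "(f \<oplus> g) \<oplus> h = f \<oplus> (g \<oplus> h)"
proof -
  obtain S s1 s2 where BY: "biproduct C (cod f) (cod f) S s1 (s1\<^sup>\<dagger>) s2 (s2\<^sup>\<dagger>)"
    using orthonormal_biproduct_exists[of "cod f"] assms by auto
  obtain SX x1 x2 where BX: "biproduct C (dom f) (dom f) SX x1 (x1\<^sup>\<dagger>) x2 (x2\<^sup>\<dagger>)"
    using orthonormal_biproduct_exists[of "dom f"] assms by auto
  note e = add_mor_eq_plus_codiag[OF _ _ _ _ _ _ BY] and pa = plus_arr[OF BX BY]
  have fg: "f \<oplus> g = plus_codiag S s1 (s1\<^sup>\<dagger>) s2 (s2\<^sup>\<dagger>) f g"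
    and gh: "g \<oplus> h = plus_codiag S s1 (s1\<^sup>\<dagger>) s2 (s2\<^sup>\<dagger>) g h"
    using e assms by auto
  have "(f \<oplus> g) \<oplus> h =
      plus_codiag S s1 (s1\<^sup>\<dagger>) s2 (s2\<^sup>\<dagger>) (plus_codiag S s1 (s1\<^sup>\<dagger>) s2 (s2\<^sup>\<dagger>) f g) h"
    unfolding fg using e pa[of f g] assms by auto
  also have "\<dots> =
      plus_codiag S s1 (s1\<^sup>\<dagger>) s2 (s2\<^sup>\<dagger>) f (plus_codiag S s1 (s1\<^sup>\<dagger>) s2 (s2\<^sup>\<dagger>) g h)"
    using plus_codiag_assoc[OF BX BY, of f g h] assms by simp
  also have "\<dots> = f \<oplus> (g \<oplus> h)"
    unfolding gh using e pa[of g h] assms by auto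
  finally show ?thesis .
qed

lemma add_zero[simp]:
  "arr f \<Longrightarrow> dom f = X \<Longrightarrow> cod f = Y \<Longrightarrow> f \<oplus> zr X Y = f"
  "arr f \<Longrightarrow> dom f = X \<Longrightarrow> cod f = Y \<Longrightarrow> zr X Y \<oplus> f = f"
proof -
  assume f: "arr f" "dom f = X" "cod f = Y"
  obtain S s1 s2 where BY: "biproduct C Y Y S s1 (s1\<^sup>\<dagger>) s2 (s2\<^sup>\<dagger>)"
    using orthonormal_biproduct_exists[of Y] f by auto
  obtain SX x1 x2 where BX: "biproduct C X X SX x1 (x1\<^sup>\<dagger>) x2 (x2\<^sup>\<dagger>)"
    using orthonormal_biproduct_exists[of X] f by auto
  have X: "obj X" "obj Y" using f by auto
  show "f \<oplus> zr X Y = f" "zr X Y \<oplus> f = f"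
    using plus_codiag_zero[OF BX BY f] add_mor_eq_plus_codiag[OF _ _ _ _ _ _ BY] f X by auto
qed

lemma add_comp:
  assumes "arr f" "arr g" "dom g = dom f" "cod g = cod f" "arr k" "cod k = dom f"
  shows "(f \<oplus> g) \<cdot> k = f \<cdot> k \<oplus> g \<cdot> k"
proof -
  obtain S s1 s2 where BY: "biproduct C (cod f) (cod f) S s1 (s1\<^sup>\<dagger>) s2 (s2\<^sup>\<dagger>)"
    using orthonormal_biproduct_exists[of "cod f"] assms by auto
  note a = biproduct_arr[OF BY]
  define P where "P = pairing S (s1\<^sup>\<dagger>) (s2\<^sup>\<dagger>) f g"
  define N where "N = copairing S s1 s2 (one (cod f)) (one (cod f))"
  note Pp = pairing_props[OF BY, of f g, folded P_def]
    and Np = copairing_props[OF BY, of "one (cod f)" "one (cod f)", folded N_def]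
  have Ps: "arr P" "dom P = dom f" "cod P = S" "s1\<^sup>\<dagger> \<cdot> P = f" "s2\<^sup>\<dagger> \<cdot> P = g"
    using Pp assms a by auto
  have Ns: "arr N" "dom N = S" "cod N = cod f"
    using Np assms a by auto
  have P: "P \<cdot> k = pairing S (s1\<^sup>\<dagger>) (s2\<^sup>\<dagger>) (f \<cdot> k) (g \<cdot> k)"
    apply (rule pairing_unique[OF BY, symmetric]) using Ps a assms by (auto simp: comp_assoc[symmetric])
  have "(f \<oplus> g) \<cdot> k = (N \<cdot> P) \<cdot> k"
    using add_mor_eq_plus_codiag[OF _ _ _ _ _ _ BY, of f g] assms unfolding plus_codiag_def N_def P_def by simp
  also have "\<dots> = N \<cdot> (P \<cdot> k)" using Ps Ns assms by (simp add: comp_assoc)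
  also have "\<dots> = plus_codiag S s1 (s1\<^sup>\<dagger>) s2 (s2\<^sup>\<dagger>) (f \<cdot> k) (g \<cdot> k)"
    unfolding P plus_codiag_def N_def using assms by simp
  also have "\<dots> = f \<cdot> k \<oplus> g \<cdot> k"
    using add_mor_eq_plus_codiag[OF _ _ _ _ _ _ BY, of "f \<cdot> k" "g \<cdot> k"] assms by simp
  finally show ?thesis .
qed

lemma comp_add:
  assumes "arr f" "arr g" "dom g = dom f" "cod g = cod f" "arr h" "dom h = cod f"
  shows "h \<cdot> (f \<oplus> g) = h \<cdot> f \<oplus> h \<cdot> g"
proof -
  obtain S s1 s2 where BX: "biproduct C (dom f) (dom f) S s1 (s1\<^sup>\<dagger>) s2 (s2\<^sup>\<dagger>)"
    using orthonormal_biproduct_exists[of "dom f"] assms by auto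
  note a = biproduct_arr[OF BX]
  define P where "P = copairing S s1 s2 f g"
  define N where "N = pairing S (s1\<^sup>\<dagger>) (s2\<^sup>\<dagger>) (one (dom f)) (one (dom f))"
  note Pp = copairing_props[OF BX, of f g, folded P_def]
    and Np = pairing_props[OF BX, of "one (dom f)" "one (dom f)", folded N_def]
  have Ps: "arr P" "dom P = S" "cod P = cod f" "P \<cdot> s1 = f" "P \<cdot> s2 = g"
    using Pp assms a by auto
  have Ns: "arr N" "dom N = dom f" "cod N = S"
    using Np assms a by auto
  have P: "h \<cdot> P = copairing S s1 s2 (h \<cdot> f) (h \<cdot> g)"
    apply (rule copairing_unique[OF BX, symmetric]) using Ps a assms by (auto simp: comp_assoc)
  have "h \<cdot> (f \<oplus> g) = h \<cdot> (P \<cdot> N)"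
    using add_mor_eq_plus_diag[OF _ _ _ _ _ _ BX, of f g] assms unfolding plus_diag_def N_def P_def by simp
  also have "\<dots> = (h \<cdot> P) \<cdot> N" using Ps Ns assms by (simp add: comp_assoc)
  also have "\<dots> = plus_diag S s1 (s1\<^sup>\<dagger>) s2 (s2\<^sup>\<dagger>) (h \<cdot> f) (h \<cdot> g)"
    unfolding P plus_diag_def N_def using assms by simp
  also have "\<dots> = h \<cdot> f \<oplus> h \<cdot> g"
    using add_mor_eq_plus_diag[OF _ _ _ _ _ _ BX, of "h \<cdot> f" "h \<cdot> g"] assms by simp
  finally show ?thesis .
qed

lemma dagger_add:
  assumes "arr f" "arr g" "dom g = dom f" "cod g = cod f"
  shows "(f \<oplus> g)\<^sup>\<dagger> = f\<^sup>\<dagger> \<oplus> g\<^sup>\<dagger>"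
proof -
  obtain S s1 s2 where BY: "biproduct C (cod f) (cod f) S s1 (s1\<^sup>\<dagger>) s2 (s2\<^sup>\<dagger>)"
    using orthonormal_biproduct_exists[of "cod f"] assms by auto
  note a = biproduct_arr[OF BY] biproduct_eqs[OF BY]
  define P where "P = pairing S (s1\<^sup>\<dagger>) (s2\<^sup>\<dagger>) f g"
  define N where "N = copairing S s1 s2 (one (cod f)) (one (cod f))"
  note Pp = pairing_props[OF BY, of f g, folded P_def]
    and Np = copairing_props[OF BY, of "one (cod f)" "one (cod f)", folded N_def]
  have Ps: "arr P" "dom P = dom f" "cod P = S" "s1\<^sup>\<dagger> \<cdot> P = f" "s2\<^sup>\<dagger> \<cdot> P = g"
    using Pp assms a by auto
  have Ns: "arr N" "dom N = S" "cod N = cod f" "N \<cdot> s1 = one (cod f)" "N \<cdot> s2 = one (cod f)"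
    using Np assms a by auto
  have e1: "P\<^sup>\<dagger> = copairing S s1 s2 (f\<^sup>\<dagger>) (g\<^sup>\<dagger>)"
  proof (rule copairing_unique[OF BY, symmetric])
    show "arr (P\<^sup>\<dagger>)" "dom (P\<^sup>\<dagger>) = S" using Ps by auto
    show "P\<^sup>\<dagger> \<cdot> s1 = f\<^sup>\<dagger>" using Ps a by (metis dagger_comp dagger_dagger dagger_arr)
    show "P\<^sup>\<dagger> \<cdot> s2 = g\<^sup>\<dagger>" using Ps a by (metis dagger_comp dagger_dagger dagger_arr)
  qed
  have e2: "N\<^sup>\<dagger> = pairing S (s1\<^sup>\<dagger>) (s2\<^sup>\<dagger>) (one (cod f)) (one (cod f))"
  proof (rule pairing_unique[OF BY, symmetric])
    show "arr (N\<^sup>\<dagger>)" "cod (N\<^sup>\<dagger>) = S" using Ns by auto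
    show "s1\<^sup>\<dagger> \<cdot> N\<^sup>\<dagger> = one (cod f)" using Ns a by (metis dagger_comp dagger_ident obj_dom_cod(2) assms(1))
    show "s2\<^sup>\<dagger> \<cdot> N\<^sup>\<dagger> = one (cod f)" using Ns a by (metis dagger_comp dagger_ident obj_dom_cod(2) assms(1))
  qed
  have "(f \<oplus> g)\<^sup>\<dagger> = (N \<cdot> P)\<^sup>\<dagger>"
    using add_mor_eq_plus_codiag[OF _ _ _ _ _ _ BY, of f g] assms unfolding plus_codiag_def N_def P_def by simp
  also have "\<dots> = P\<^sup>\<dagger> \<cdot> N\<^sup>\<dagger>" using Ps Ns by simp
  also have "\<dots> = plus_diag S s1 (s1\<^sup>\<dagger>) s2 (s2\<^sup>\<dagger>) (f\<^sup>\<dagger>) (g\<^sup>\<dagger>)"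
    unfolding plus_diag_def e1 e2 using assms by simp
  also have "\<dots> = f\<^sup>\<dagger> \<oplus> g\<^sup>\<dagger>"
    using add_mor_eq_plus_diag[OF _ _ _ _ _ _ BY, of "f\<^sup>\<dagger>" "g\<^sup>\<dagger>"] assms by simp
  finally show ?thesis .
qed

lemma biproduct_ident:
  assumes B: "biproduct C A B S s1 r1 s2 r2"
  shows "one S = s1 \<cdot> r1 \<oplus> s2 \<cdot> r2"
proof -
  note a = biproduct_arr[OF B] biproduct_eqs[OF B]
  show ?thesis
  proof (rule biproduct_eq_by_projections[OF B])
    show "r1 \<cdot> one S = r1 \<cdot> (s1 \<cdot> r1 \<oplus> s2 \<cdot> r2)"
      using a by (simp add: comp_add comp_assoc[symmetric])
    show "r2 \<cdot> one S = r2 \<cdot> (s1 \<cdot> r1 \<oplus> s2 \<cdot> r2)"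
      using a by (simp add: comp_add comp_assoc[symmetric])
  qed (use a in auto)
qed

abbreviation msum where "msum X Y fs \<equiv> sum_mor C X Y fs"

lemma sum_mor_Nil[simp]: "msum X Y [] = zr X Y"
  and sum_mor_Cons[simp]: "msum X Y (f # fs) = f \<oplus> msum X Y fs"
  unfolding sum_mor_def by auto

lemma sum_mor_hom:
  assumes "obj X" "obj Y" "set fs \<subseteq> hom C X Y"
  shows "msum X Y fs \<in> hom C X Y"
  using assms by (induction fs) (auto simp: hom_iff add_arr)

lemma sum_arr[simp]:
  "obj X \<Longrightarrow> obj Y \<Longrightarrow> set fs \<subseteq> hom C X Y \<Longrightarrow> arr (msum X Y fs)"
  "obj X \<Longrightarrow> obj Y \<Longrightarrow> set fs \<subseteq> hom C X Y \<Longrightarrow> dom (msum X Y fs) = X"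
  "obj X \<Longrightarrow> obj Y \<Longrightarrow> set fs \<subseteq> hom C X Y \<Longrightarrow> cod (msum X Y fs) = Y"
  using sum_mor_hom by (auto simp: hom_iff)

lemma sum_mor_snoc:
  assumes "obj X" "obj Y" "set fs \<subseteq> hom C X Y" "g \<in> hom C X Y"
  shows "msum X Y (fs @ [g]) = msum X Y fs \<oplus> g"
  using assms
proof (induction fs)
  case Nil then show ?case using add_commute[of g "zr X Y"] by (simp add: hom_iff)
next
  case (Cons a fs) then show ?case by (simp add: hom_iff add_assoc)
qed

lemma comp_sum:
  assumes "obj X" "arr h" "dom h = Y" "set fs \<subseteq> hom C X Y"
  shows "h \<cdot> msum X Y fs = msum X (cod h) (map (\<lambda>f. h \<cdot> f) fs)"
  using assms by (induction fs) (auto simp: hom_iff comp_add)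

lemma sum_comp:
  assumes "obj Y" "arr k" "cod k = X" "set fs \<subseteq> hom C X Y"
  shows "msum X Y fs \<cdot> k = msum (dom k) Y (map (\<lambda>f. f \<cdot> k) fs)"
  using assms by (induction fs) (auto simp: hom_iff add_comp)

lemma sum_zeros:
  assumes "obj X" "obj Y" "\<And>f. f \<in> set fs \<Longrightarrow> f = zr X Y"
  shows "msum X Y fs = zr X Y"
  using assms(3)
proof (induction fs)
  case (Cons a fs)
  then have "a = zr X Y" "msum X Y fs = zr X Y" by simp_all
  then show ?case using assms(1,2) by simp
qed simp

lemma sum_map_single:
  assumes "obj X" "obj Y" "i < k" "\<And>j. j < k \<Longrightarrow> F j \<in> hom C X Y"
    and "\<And>j. j < k \<Longrightarrow> j \<noteq> i \<Longrightarrow> F j = zr X Y"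
  shows "msum X Y (map F [0..<k]) = F i"
  using assms
proof (induction k)
  case 0 then show ?case by simp
next
  case (Suc k)
  have "msum X Y (map F [0..<Suc k]) = msum X Y (map F [0..<k]) \<oplus> F k"
    using sum_mor_snoc[of X Y "map F [0..<k]" "F k"] Suc.prems by (simp add: image_subset_iff)
  also have "\<dots> = F i"
  proof (cases "i = k")
    case True
    then have "msum X Y (map F [0..<k]) = zr X Y" using Suc.prems by (intro sum_zeros) auto
    then show ?thesis using True Suc.prems by (simp add: hom_iff)
  next
    case False
    then have "msum X Y (map F [0..<k]) = F i" using Suc.prems by (intro Suc.IH) auto
    then show ?thesis using False Suc.prems by (simp add: hom_iff)
  qed
  finally show ?case .
qed

lemma factors_through_add:
  assumes a: "arr v" "arr g1" "arr g2" "dom g2 = dom g1" "cod g1 = cod v" "cod g2 = cod v"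
    and f1: "factors_through v g1" and f2: "factors_through v g2"
  shows "factors_through v (g1 \<oplus> g2)"
proof -
  obtain h1 where h1: "arr h1" "dom h1 = dom g1" "cod h1 = dom v" "v \<cdot> h1 = g1"
    using f1 by (rule factors_throughE)
  obtain h2 where h2: "arr h2" "dom h2 = dom g2" "cod h2 = dom v" "v \<cdot> h2 = g2"
    using f2 by (rule factors_throughE)
  have "v \<cdot> (h1 \<oplus> h2) = v \<cdot> h1 \<oplus> v \<cdot> h2"
    by (rule comp_add) (use a h1(1-3) h2(1-3) in auto)
  then have "v \<cdot> (h1 \<oplus> h2) = g1 \<oplus> g2" using h1(4) h2(4) by simp
  then show ?thesis by (rule factors_throughI[rotated 3]) (use a h1(1-3) h2(1-3) in auto)
qed

lemma factors_through_sum: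
  assumes "arr v" "obj W" "set fs \<subseteq> hom C W (cod v)" "\<And>f. f \<in> set fs \<Longrightarrow> factors_through v f"
  shows "factors_through v (msum W (cod v) fs)"
  using assms
proof (induction fs)
  case Nil
  show ?case by (rule factors_throughI[of "zr W (dom v)"]) (use Nil in auto)
next
  case (Cons f fs)
  then show ?case
    by (simp add: hom_iff) (intro factors_through_add; simp add: hom_iff)
qed

lemma add_add_swap_middle:
  assumes "arr a" "arr b" "arr c" "arr d" "dom b = dom a" "dom c = dom a" "dom d = dom a"
    "cod b = cod a" "cod c = cod a" "cod d = cod a"
  shows "(a \<oplus> b) \<oplus> (c \<oplus> d) = (a \<oplus> c) \<oplus> (b \<oplus> d)"
proof -
  have "(a \<oplus> b) \<oplus> (c \<oplus> d) = a \<oplus> (b \<oplus> (c \<oplus> d))" using assms by (simp add: add_assoc)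
  also have "b \<oplus> (c \<oplus> d) = (b \<oplus> c) \<oplus> d" using assms by (simp add: add_assoc)
  also have "b \<oplus> c = c \<oplus> b" using assms by (simp add: add_commute)
  also have "(c \<oplus> b) \<oplus> d = c \<oplus> (b \<oplus> d)" using assms by (simp add: add_assoc)
  also have "a \<oplus> (c \<oplus> (b \<oplus> d)) = (a \<oplus> c) \<oplus> (b \<oplus> d)" using assms by (simp add: add_assoc)
  finally show ?thesis .
qed

lemma dagger_diag:
  assumes B: "biproduct C X X S s1 (s1\<^sup>\<dagger>) s2 (s2\<^sup>\<dagger>)"
  shows "(pairing S (s1\<^sup>\<dagger>) (s2\<^sup>\<dagger>) (one X) (one X))\<^sup>\<dagger> = copairing S s1 s2 (one X) (one X)"
proof -
  note a = biproduct_arr[OF B] biproduct_eqs[OF B]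
  define D where "D = pairing S (s1\<^sup>\<dagger>) (s2\<^sup>\<dagger>) (one X) (one X)"
  have D: "arr D" "dom D = X" "cod D = S" "s1\<^sup>\<dagger> \<cdot> D = one X" "s2\<^sup>\<dagger> \<cdot> D = one X"
    using pairing_props[OF B, of "one X" "one X", folded D_def] a by auto
  have "copairing S s1 s2 (one X) (one X) = D\<^sup>\<dagger>"
  proof (rule copairing_unique[OF B])
    show "D\<^sup>\<dagger> \<cdot> s1 = one X" "D\<^sup>\<dagger> \<cdot> s2 = one X"
      using D a by (metis dagger_comp dagger_dagger dagger_ident)+
  qed (use D in auto)
  then show ?thesis unfolding D_def ..
qed

end

section \<open>Negatives and subtraction\<close>

locale pre_hilbert_cat = semiadditive_star_cat +
  assumes isometric_kernels: "\<forall>f\<in>Arr C. \<exists>k. kernel C f k \<and> isometry C k"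
    and diagonals_are_kernels: "\<forall>X\<in>Obj C. \<forall>S s1 s2 d. orthonormal_biproduct C X X S s1 s2 \<and>
          d \<in> hom C X S \<and> comp C (star C s1) d = idm C X \<and> comp C (star C s2) d = idm C X
          \<longrightarrow> (\<exists>f. kernel C f d)"
begin

lemma kernelD:
  assumes "kernel C f k"
  shows "arr f" "arr k" "cod k = dom f" "f \<cdot> k = zr (dom k) (cod f)"
    "\<And>g. arr g \<Longrightarrow> cod g = dom f \<Longrightarrow> f \<cdot> g = zr (dom g) (cod f) \<Longrightarrow>
      \<exists>h. arr h \<and> dom h = dom g \<and> cod h = dom k \<and> k \<cdot> h = g"
  using assms unfolding kernel_def hom_def by blast+

lemma isometric_kernel_exists: "arr f \<Longrightarrow> \<exists>k. kernel C f k \<and> isometry C k"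
  using isometric_kernels by blast

text \<open>A negative of the identity of \<open>X\<close> is built from the components \<open>k\<^sub>1, k\<^sub>2\<close> of an
  isometric kernel \<open>k\<close> of the codiagonal, given a morphism \<open>f\<close> whose kernel is the diagonal.\<close>

context
  fixes X S s1 s2 f k k1 k2
  assumes B: "biproduct C X X S s1 (s1\<^sup>\<dagger>) s2 (s2\<^sup>\<dagger>)"
    and diag_kernel: "kernel C f (pairing S (s1\<^sup>\<dagger>) (s2\<^sup>\<dagger>) (one X) (one X))"
    and codiag_kernel: "kernel C (copairing S s1 s2 (one X) (one X)) k"
    and isometry_k: "isometry C k"
    and k1: "k1 = s1\<^sup>\<dagger> \<cdot> k" and k2: "k2 = s2\<^sup>\<dagger> \<cdot> k"
begin

lemma codiag_kernel_arr:
  "arr k" "cod k = S" "arr k1" "dom k1 = dom k" "cod k1 = X" "arr k2" "dom k2 = dom k" "cod k2 = X"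
  using kernelD[OF codiag_kernel] copairing_props[OF B, of "one X" "one X"] biproduct_arr[OF B]
  unfolding k1 k2 by auto

lemma codiag_kernel_decomp: "k = s1 \<cdot> k1 \<oplus> s2 \<cdot> k2"
proof -
  note a = biproduct_arr[OF B] codiag_kernel_arr
  have "k = (s1 \<cdot> s1\<^sup>\<dagger> \<oplus> s2 \<cdot> s2\<^sup>\<dagger>) \<cdot> k"
    using biproduct_ident[OF B, symmetric] a by simp
  also have "\<dots> = s1 \<cdot> k1 \<oplus> s2 \<cdot> k2"
    using a unfolding k1 k2 by (simp add: add_comp comp_assoc)
  finally show ?thesis .
qed

lemma codiag_kernel_components_sum: "k1 \<oplus> k2 = zr (dom k) X"
proof -
  note a = biproduct_arr[OF B] codiag_kernel_arr
  define N where "N = copairing S s1 s2 (one X) (one X)"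
  have N: "arr N" "dom N = S" "cod N = X" "N \<cdot> s1 = one X" "N \<cdot> s2 = one X"
    using copairing_props[OF B, of "one X" "one X", folded N_def] a by auto
  have "zr (dom k) X = N \<cdot> k" using kernelD[OF codiag_kernel, folded N_def] N by simp
  also have "\<dots> = N \<cdot> (s1 \<cdot> k1) \<oplus> N \<cdot> (s2 \<cdot> k2)"
    by (subst codiag_kernel_decomp) (use a N in \<open>simp add: comp_add\<close>)
  also have "\<dots> = k1 \<oplus> k2" using a N by (simp add: comp_assoc[symmetric])
  finally show ?thesis by simp
qed

lemma dagger_codiag_kernel_components_sum: "k1\<^sup>\<dagger> \<oplus> k2\<^sup>\<dagger> = zr X (dom k)"
  using dagger_add[of k1 k2] codiag_kernel_arr codiag_kernel_components_sum by simp
    (metis dagger_zero obj_dom_cod)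

text \<open>Since \<open>f\<^sup>\<dagger>\<close> factors through \<open>k\<close>, \<open>k\<^sup>\<dagger> q = 0\<close> implies \<open>f q = 0\<close>; so \<open>q\<close>
  factors through the diagonal and its two components agree.\<close>

lemma codiag_kernel_separates:
  assumes xy: "arr x" "arr y" "cod x = X" "cod y = X" "dom y = dom x"
    and z: "k1\<^sup>\<dagger> \<cdot> x \<oplus> k2\<^sup>\<dagger> \<cdot> y = zr (dom x) (dom k)"
  shows "x = y"
proof -
  note a = biproduct_arr[OF B] biproduct_eqs[OF B] codiag_kernel_arr
  note fk = kernelD[OF diag_kernel] and kN = kernelD[OF codiag_kernel]
  define D where "D = pairing S (s1\<^sup>\<dagger>) (s2\<^sup>\<dagger>) (one X) (one X)"
  have D: "arr D" "dom D = X" "cod D = S" "s1\<^sup>\<dagger> \<cdot> D = one X" "s2\<^sup>\<dagger> \<cdot> D = one X"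
    using pairing_props[OF B, of "one X" "one X", folded D_def] a by auto
  define N where "N = copairing S s1 s2 (one X) (one X)"
  have N: "arr N" "dom N = S" "cod N = X" "D\<^sup>\<dagger> = N"
    using copairing_props[OF B, of "one X" "one X", folded N_def] dagger_diag[OF B] a
    unfolding D_def N_def by auto
  have fD: "dom f = S" "f \<cdot> D = zr X (cod f)"
    using fk D unfolding D_def[symmetric] by auto
  have "N \<cdot> f\<^sup>\<dagger> = (f \<cdot> D)\<^sup>\<dagger>" using N D fk fD(1) by simp
  also have "\<dots> = zr (cod f) X" using fD fk a by simp
  finally obtain h where h: "arr h" "dom h = cod f" "cod h = dom k" "k \<cdot> h = f\<^sup>\<dagger>"
    using kN(5)[of "f\<^sup>\<dagger>"] fk fD N unfolding N_def[symmetric] by auto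
  have f: "f = h\<^sup>\<dagger> \<cdot> k\<^sup>\<dagger>"
    using h a fk by (metis dagger_comp dagger_dagger)
  define q where "q = pairing S (s1\<^sup>\<dagger>) (s2\<^sup>\<dagger>) x y"
  have q: "arr q" "dom q = dom x" "cod q = S" "s1\<^sup>\<dagger> \<cdot> q = x" "s2\<^sup>\<dagger> \<cdot> q = y"
    using pairing_props[OF B, of x y, folded q_def] xy by auto
  have "k\<^sup>\<dagger> \<cdot> q = k\<^sup>\<dagger> \<cdot> ((s1 \<cdot> s1\<^sup>\<dagger> \<oplus> s2 \<cdot> s2\<^sup>\<dagger>) \<cdot> q)"
    using biproduct_ident[OF B] q by (metis comp_ident_left)
  also have "\<dots> = (k\<^sup>\<dagger> \<cdot> s1) \<cdot> (s1\<^sup>\<dagger> \<cdot> q) \<oplus> (k\<^sup>\<dagger> \<cdot> s2) \<cdot> (s2\<^sup>\<dagger> \<cdot> q)"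
    using q a xy by (simp add: add_comp comp_add comp_assoc)
  also have "\<dots> = zr (dom x) (dom k)"
    using z q a unfolding k1 k2 by simp
  finally have "f \<cdot> q = zr (dom q) (cod f)"
    using f h q a xy by (simp add: comp_assoc)
  then obtain u where u: "arr u" "dom u = dom q" "cod u = X" "D \<cdot> u = q"
    using fk(5)[of q] q fk D unfolding D_def[symmetric] by auto
  have "x = (s1\<^sup>\<dagger> \<cdot> D) \<cdot> u" "y = (s2\<^sup>\<dagger> \<cdot> D) \<cdot> u"
    using u q D(1-3) a by (simp_all add: comp_assoc)
  then show ?thesis using D u by simp
qed

lemma codiag_kernel_component_epi:
  assumes uv: "arr u" "arr v" "dom u = X" "dom v = X" "cod v = cod u" and e: "u \<cdot> k1 = v \<cdot> k1"
  shows "u = v"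
proof -
  note a = codiag_kernel_arr
  have "k1\<^sup>\<dagger> \<cdot> u\<^sup>\<dagger> \<oplus> k2\<^sup>\<dagger> \<cdot> v\<^sup>\<dagger> = k1\<^sup>\<dagger> \<cdot> v\<^sup>\<dagger> \<oplus> k2\<^sup>\<dagger> \<cdot> v\<^sup>\<dagger>"
    using e uv a by (metis dagger_comp)
  also have "\<dots> = (k1\<^sup>\<dagger> \<oplus> k2\<^sup>\<dagger>) \<cdot> v\<^sup>\<dagger>" using a uv by (simp add: add_comp)
  also have "\<dots> = zr (dom (u\<^sup>\<dagger>)) (dom k)" using dagger_codiag_kernel_components_sum a uv by simp
  finally have "u\<^sup>\<dagger> = v\<^sup>\<dagger>" by (rule codiag_kernel_separates[rotated 5]) (use uv in auto)
  then show ?thesis using uv by (metis dagger_dagger)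
qed

lemma codiag_kernel_components_gram: "one (dom k) = k1\<^sup>\<dagger> \<cdot> k1 \<oplus> k2\<^sup>\<dagger> \<cdot> k2"
proof -
  note k12 = codiag_kernel_arr and a = biproduct_arr[OF B]
  have stk: "k\<^sup>\<dagger> \<cdot> s1 = k1\<^sup>\<dagger>" "k\<^sup>\<dagger> \<cdot> s2 = k2\<^sup>\<dagger>"
    unfolding k1 k2 using a k12 by simp_all
  have "one (dom k) = k\<^sup>\<dagger> \<cdot> k" using isometryD[OF isometry_k] by simp
  also have "\<dots> = (k\<^sup>\<dagger> \<cdot> s1) \<cdot> k1 \<oplus> (k\<^sup>\<dagger> \<cdot> s2) \<cdot> k2"
    by (subst (2) codiag_kernel_decomp) (use a k12 in \<open>simp add: comp_add comp_assoc\<close>)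
  finally show ?thesis unfolding stk .
qed

text \<open>\<open>1 + 2 k\<^sub>2\<^sup>\<dagger> k\<^sub>1 = (k\<^sub>1\<^sup>\<dagger> + k\<^sub>2\<^sup>\<dagger>) k\<^sub>1 + k\<^sub>2\<^sup>\<dagger> (k\<^sub>2 + k\<^sub>1) = 0\<close>\<close>

lemma codiag_kernel_cross_term:
  "one (dom k) \<oplus> (k2\<^sup>\<dagger> \<cdot> k1 \<oplus> k2\<^sup>\<dagger> \<cdot> k1) = zr (dom k) (dom k)"
proof -
  note k12 = codiag_kernel_arr
  have K: "obj (dom k)" and X: "obj X" using k12 by auto
  have "(k1\<^sup>\<dagger> \<cdot> k1 \<oplus> k2\<^sup>\<dagger> \<cdot> k2) \<oplus> (k2\<^sup>\<dagger> \<cdot> k1 \<oplus> k2\<^sup>\<dagger> \<cdot> k1)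
      = (k1\<^sup>\<dagger> \<cdot> k1 \<oplus> k2\<^sup>\<dagger> \<cdot> k1) \<oplus> (k2\<^sup>\<dagger> \<cdot> k2 \<oplus> k2\<^sup>\<dagger> \<cdot> k1)"
    using k12 by (simp add: add_add_swap_middle)
  also have "\<dots> = (k1\<^sup>\<dagger> \<oplus> k2\<^sup>\<dagger>) \<cdot> k1 \<oplus> k2\<^sup>\<dagger> \<cdot> (k2 \<oplus> k1)"
    using k12 by (simp add: add_comp comp_add)
  also have "\<dots> = zr (dom k) (dom k)"
    using dagger_codiag_kernel_components_sum codiag_kernel_components_sum
      add_commute[of k1 k2] k12 K by simp
  finally show ?thesis unfolding codiag_kernel_components_gram[symmetric] .
qed

lemma ident_add_codiag_kernel_term: "one X \<oplus> (k1 \<cdot> k2\<^sup>\<dagger> \<oplus> k1 \<cdot> k2\<^sup>\<dagger>) = zr X X"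
proof -
  note k12 = codiag_kernel_arr
  have K: "obj (dom k)" and X: "obj X" using k12 by auto
  have "(one X \<oplus> (k1 \<cdot> k2\<^sup>\<dagger> \<oplus> k1 \<cdot> k2\<^sup>\<dagger>)) \<cdot> k1
      = k1 \<cdot> (one (dom k) \<oplus> (k2\<^sup>\<dagger> \<cdot> k1 \<oplus> k2\<^sup>\<dagger> \<cdot> k1))"
    using k12 X by (simp add: add_comp comp_add comp_assoc)
  also have "\<dots> = zr X X \<cdot> k1" using codiag_kernel_cross_term k12 K X by simp
  finally show ?thesis
    by (rule codiag_kernel_component_epi[rotated 5]) (use k12 X in auto)
qed

end

lemma ident_has_negative:
  assumes X: "obj X"
  shows "\<exists>c. arr c \<and> dom c = X \<and> cod c = X \<and> one X \<oplus> c = zr X X"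
proof -
  obtain S s1 s2 where B: "biproduct C X X S s1 (s1\<^sup>\<dagger>) s2 (s2\<^sup>\<dagger>)"
    using orthonormal_biproduct_exists[OF X] by blast
  note a = biproduct_arr[OF B]
  have D: "pairing S (s1\<^sup>\<dagger>) (s2\<^sup>\<dagger>) (one X) (one X) \<in> hom C X S"
    "s1\<^sup>\<dagger> \<cdot> pairing S (s1\<^sup>\<dagger>) (s2\<^sup>\<dagger>) (one X) (one X) = one X"
    "s2\<^sup>\<dagger> \<cdot> pairing S (s1\<^sup>\<dagger>) (s2\<^sup>\<dagger>) (one X) (one X) = one X"
    using pairing_props[OF B, of "one X" "one X"] a by (auto simp: hom_iff)
  have "orthonormal_biproduct C X X S s1 s2"
    using B unfolding orthonormal_biproduct_def .
  then have "\<exists>f. kernel C f (pairing S (s1\<^sup>\<dagger>) (s2\<^sup>\<dagger>) (one X) (one X))"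
    by (intro diagonals_are_kernels[rule_format, OF X]) (use D in blast)
  then obtain f where f: "kernel C f (pairing S (s1\<^sup>\<dagger>) (s2\<^sup>\<dagger>) (one X) (one X))" ..
  have "arr (copairing S s1 s2 (one X) (one X))"
    using copairing_props[OF B, of "one X" "one X"] a by simp
  then obtain k where k: "kernel C (copairing S s1 s2 (one X) (one X)) k" "isometry C k"
    using isometric_kernel_exists by blast
  define k1 where "k1 = s1\<^sup>\<dagger> \<cdot> k"
  define k2 where "k2 = s2\<^sup>\<dagger> \<cdot> k"
  note k12 = codiag_kernel_arr[OF B f k k1_def k2_def]
  have "arr (k1 \<cdot> k2\<^sup>\<dagger> \<oplus> k1 \<cdot> k2\<^sup>\<dagger>)" "dom (k1 \<cdot> k2\<^sup>\<dagger> \<oplus> k1 \<cdot> k2\<^sup>\<dagger>) = X"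
    "cod (k1 \<cdot> k2\<^sup>\<dagger> \<oplus> k1 \<cdot> k2\<^sup>\<dagger>) = X"
    using k12 by auto
  with ident_add_codiag_kernel_term[OF B f k k1_def k2_def] show ?thesis by blast
qed

abbreviation sb (infixl "\<ominus>" 65) where "f \<ominus> g \<equiv> sub_mor C f g"

definition neg_ident where "neg_ident X = (SOME c. arr c \<and> dom c = X \<and> cod c = X \<and> one X \<oplus> c = zr X X)"

lemma neg_ident_props:
  assumes "obj X"
  shows "arr (neg_ident X)" "dom (neg_ident X) = X" "cod (neg_ident X) = X" "one X \<oplus> neg_ident X = zr X X"
  using someI_ex[OF ident_has_negative[OF assms]] unfolding neg_ident_def[symmetric] by auto

definition neg where "neg f = neg_ident (cod f) \<cdot> f"

lemma neg_arr[simp]: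
  "arr f \<Longrightarrow> arr (neg f)" "arr f \<Longrightarrow> dom (neg f) = dom f" "arr f \<Longrightarrow> cod (neg f) = cod f"
  unfolding neg_def using neg_ident_props by auto

lemma add_neg: assumes "arr f" shows "f \<oplus> neg f = zr (dom f) (cod f)" "neg f \<oplus> f = zr (dom f) (cod f)"
proof -
  note n = neg_ident_props[of "cod f"]
  have "(one (cod f) \<oplus> neg_ident (cod f)) \<cdot> f = one (cod f) \<cdot> f \<oplus> neg_ident (cod f) \<cdot> f"
    by (rule add_comp) (use assms n in auto)
  then have "f \<oplus> neg f = (one (cod f) \<oplus> neg_ident (cod f)) \<cdot> f"
    unfolding neg_def using assms by simp
  also have "\<dots> = zr (dom f) (cod f)" using n assms by simp
  finally show "f \<oplus> neg f = zr (dom f) (cod f)" .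
  then show "neg f \<oplus> f = zr (dom f) (cod f)" using add_commute[of "neg f" f] assms by simp
qed

context
  fixes f g
  assumes fg: "arr f" "arr g" "dom g = dom f" "cod g = cod f"
begin

lemma sub_eq_add_neg: "f \<ominus> g = f \<oplus> neg g"
  unfolding sub_mor_def
proof (rule the_equality)
  show "f \<oplus> neg g \<in> hom C (dom f) (cod f) \<and> f \<oplus> neg g \<oplus> g = f"
    using fg add_neg[of g] by (simp add: hom_def add_assoc)
  fix h assume h: "h \<in> hom C (dom f) (cod f) \<and> h \<oplus> g = f"
  have hs: "arr h" "dom h = dom f" "cod h = cod f" using h by (auto simp: hom_def)
  have "h = h \<oplus> (g \<oplus> neg g)" using hs fg add_neg[of g] by simp
  also have "\<dots> = (h \<oplus> g) \<oplus> neg g" using hs fg by (simp add: add_assoc)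
  finally show "h = f \<oplus> neg g" using h by simp
qed

lemma sub_arr: "arr (f \<ominus> g)" "dom (f \<ominus> g) = dom f" "cod (f \<ominus> g) = cod f"
  using sub_eq_add_neg fg by auto

lemma sub_add_cancel: "(f \<ominus> g) \<oplus> g = f"
  using sub_eq_add_neg fg add_neg[of g] by (simp add: add_assoc)

lemma sub_unique: assumes "arr h" "dom h = dom f" "cod h = cod f" "h \<oplus> g = f" shows "f \<ominus> g = h"
proof -
  have "f \<ominus> g = (h \<oplus> g) \<oplus> neg g" using sub_eq_add_neg assms by simp
  also have "\<dots> = h \<oplus> (g \<oplus> neg g)" using assms(1-3) fg by (simp add: add_assoc)
  also have "\<dots> = h" using assms fg add_neg[of g] by simp
  finally show ?thesis .
qed

lemma sub_eq_zero_imp_eq: assumes "f \<ominus> g = zr (dom f) (cod f)" shows "f = g"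
  using sub_add_cancel assms fg by simp

end

lemma sub_arr_simp[simp]:
  "arr f \<Longrightarrow> arr g \<Longrightarrow> dom g = dom f \<Longrightarrow> cod g = cod f \<Longrightarrow> arr (f \<ominus> g)"
  "arr f \<Longrightarrow> arr g \<Longrightarrow> dom g = dom f \<Longrightarrow> cod g = cod f \<Longrightarrow> dom (f \<ominus> g) = dom f"
  "arr f \<Longrightarrow> arr g \<Longrightarrow> dom g = dom f \<Longrightarrow> cod g = cod f \<Longrightarrow> cod (f \<ominus> g) = cod f"
  using sub_arr by auto

lemma sub_self[simp]: "arr f \<Longrightarrow> f \<ominus> f = zr (dom f) (cod f)"
  using sub_unique[of f f "zr (dom f) (cod f)"] by simp

lemma sub_zero[simp]: "arr f \<Longrightarrow> dom f = X \<Longrightarrow> cod f = Y \<Longrightarrow> f \<ominus> zr X Y = f"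
  using sub_unique[of f "zr X Y" f] by auto

lemma comp_sub:
  assumes "arr f" "arr g" "dom g = dom f" "cod g = cod f" "arr h" "dom h = cod f"
  shows "h \<cdot> (f \<ominus> g) = h \<cdot> f \<ominus> h \<cdot> g"
proof (rule sub_unique[symmetric])
  show "h \<cdot> (f \<ominus> g) \<oplus> h \<cdot> g = h \<cdot> f"
    using assms comp_add[of "f \<ominus> g" g h] sub_add_cancel[of f g] by simp
qed (use assms in auto)

lemma sub_comp:
  assumes "arr f" "arr g" "dom g = dom f" "cod g = cod f" "arr k" "cod k = dom f"
  shows "(f \<ominus> g) \<cdot> k = f \<cdot> k \<ominus> g \<cdot> k"
proof (rule sub_unique[symmetric])
  show "(f \<ominus> g) \<cdot> k \<oplus> g \<cdot> k = f \<cdot> k"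
    using assms add_comp[of "f \<ominus> g" g k] sub_add_cancel[of f g] by simp
qed (use assms in auto)

lemma factors_through_sub:
  assumes a: "arr v" "arr g1" "arr g2" "dom g2 = dom g1" "cod g1 = cod v" "cod g2 = cod v"
    and f1: "factors_through v g1" and f2: "factors_through v g2"
  shows "factors_through v (g1 \<ominus> g2)"
proof -
  obtain h1 where h1: "arr h1" "dom h1 = dom g1" "cod h1 = dom v" "v \<cdot> h1 = g1"
    using f1 by (rule factors_throughE)
  obtain h2 where h2: "arr h2" "dom h2 = dom g2" "cod h2 = dom v" "v \<cdot> h2 = g2"
    using f2 by (rule factors_throughE)
  have "v \<cdot> (h1 \<ominus> h2) = v \<cdot> h1 \<ominus> v \<cdot> h2"
    by (rule comp_sub) (use a h1(1-3) h2(1-3) in auto)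
  then have "v \<cdot> (h1 \<ominus> h2) = g1 \<ominus> g2" using h1(4) h2(4) by simp
  then show ?thesis by (rule factors_throughI[rotated 3]) (use a h1(1-3) h2(1-3) in auto)
qed

text \<open>The isometric kernel \<open>i\<close> of \<open>1 - f r\<close> represents the image of the idempotent
  \<open>f r\<close>, through which \<open>f\<close> factors by an isomorphism.\<close>

lemma split_mono_isometric_factorization:
  assumes f: "arr f" and r: "arr r" "dom r = cod f" "cod r = dom f" and rf: "r \<cdot> f = one (dom f)"
  obtains i h g where "isometry C i" "arr h" "dom h = dom f" "cod h = dom i" "i \<cdot> h = f"
    "arr g" "dom g = dom i" "cod g = dom f" "g \<cdot> h = one (dom f)" "h \<cdot> g = one (dom i)"
proof -
  define X where "X = cod f"
  define e where "e = f \<cdot> r"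
  have X: "obj X" and e: "arr e" "dom e = X" "cod e = X" unfolding e_def X_def using f r by auto
  have E: "arr (one X \<ominus> e)" "dom (one X \<ominus> e) = X" "cod (one X \<ominus> e) = X" using e X by auto
  obtain i where ki: "kernel C (one X \<ominus> e) i" and iso: "isometry C i"
    using isometric_kernel_exists[OF E(1)] by blast
  note kI = kernelD[OF ki]
  have i: "arr i" "cod i = X" using kI E by auto
  have ef: "e \<cdot> f = f" unfolding e_def using f r rf by (simp add: comp_assoc)
  have "(one X \<ominus> e) \<cdot> f = one X \<cdot> f \<ominus> e \<cdot> f" by (rule sub_comp) (use e X f X_def in auto)
  then have "(one X \<ominus> e) \<cdot> f = zr (dom f) X" using ef f X_def by simp
  then obtain h where h: "arr h" "dom h = dom f" "cod h = dom i" "i \<cdot> h = f"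
    using kI(5)[of f] f E X_def by auto
  have "(one X \<ominus> e) \<cdot> i = one X \<cdot> i \<ominus> e \<cdot> i" by (rule sub_comp) (use e X i in auto)
  then have "i \<ominus> e \<cdot> i = zr (dom i) X" using kI i E by simp
  then have ei: "e \<cdot> i = i" using sub_eq_zero_imp_eq[of i "e \<cdot> i"] i e by simp
  define g where "g = r \<cdot> i"
  have g: "arr g" "dom g = dom i" "cod g = dom f" unfolding g_def using r i X_def by auto
  have "g \<cdot> h = r \<cdot> (i \<cdot> h)" unfolding g_def using r i h X_def by (simp add: comp_assoc)
  then have gh: "g \<cdot> h = one (dom f)" using h rf by simp
  have "h \<cdot> g = one (dom i)"
  proof (rule isometry_cancel[OF iso])
    have "i \<cdot> (h \<cdot> g) = (i \<cdot> h) \<cdot> g" using i h(1-3) g by (simp add: comp_assoc)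
    also have "\<dots> = e \<cdot> i" unfolding g_def e_def using h f r i X_def by (simp add: comp_assoc)
    finally show "i \<cdot> (h \<cdot> g) = i \<cdot> one (dom i)" using ei i by simp
  qed (use h g i in auto)
  then show ?thesis using that iso h g gh by blast
qed

lemma split_mono_closed_mono:
  assumes "arr f" "arr r" "dom r = cod f" "cod r = dom f" "r \<cdot> f = one (dom f)"
  shows "closed_mono C f"
proof -
  obtain i h g where "isometry C i" "arr h" "dom h = dom f" "cod h = dom i" "i \<cdot> h = f"
    "arr g" "dom g = dom i" "cod g = dom f" "g \<cdot> h = one (dom f)" "h \<cdot> g = one (dom i)"
    using split_mono_isometric_factorization[OF assms] .
  then show ?thesis using isometry_comp_iso_closed_mono[of i h g] by simp
qed

section \<open>Orthogonal projections and unions\<close>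

lemma proj_mor_comp_orthogonal:
  assumes t: "closed_mono C t" and g: "arr g" "cod g = cod t" and orth: "t\<^sup>\<dagger> \<cdot> g = zr (dom g) (dom t)"
  shows "proj_mor C t \<cdot> g = zr (dom g) (cod t)"
proof -
  have ta: "arr t" and i: "invertible C (t\<^sup>\<dagger> \<cdot> t)" using t unfolding closed_mono_def by auto
  note v = inv_mor_props[OF i]
  have "proj_mor C t \<cdot> g = t \<cdot> (inv_mor C (t\<^sup>\<dagger> \<cdot> t) \<cdot> (t\<^sup>\<dagger> \<cdot> g))"
    unfolding proj_mor_def using v(1-3) ta g by (simp add: comp_assoc)
  also have "\<dots> = zr (dom g) (cod t)" using orth v(1-3) ta g by simp
  finally show ?thesis .
qed

context
  fixes m :: nat and A X and t :: "nat \<Rightarrow> _"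
  assumes X: "obj X"
    and orthogonal: "orthogonal_cospan C m A X t"
    and closed: "\<And>k. k < m \<Longrightarrow> closed_mono C (t k)"
begin

lemma orthogonal_cospan_arr:
  "k < m \<Longrightarrow> arr (t k)" "k < m \<Longrightarrow> dom (t k) = A k" "k < m \<Longrightarrow> cod (t k) = X"
  using orthogonal unfolding orthogonal_cospan_def wide_cospan_def hom_iff by auto

definition orth_proj_sum where "orth_proj_sum = msum X X (map (\<lambda>j. proj_mor C (t j)) [0..<m])"

lemma orth_proj_sum_summands: "set (map (\<lambda>j. proj_mor C (t j)) [0..<m]) \<subseteq> hom C X X"
  using proj_mor_props[OF closed] orthogonal_cospan_arr by (auto simp: hom_iff)

lemma orth_proj_sum_arr: "arr orth_proj_sum" "dom orth_proj_sum = X" "cod orth_proj_sum = X"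
  unfolding orth_proj_sum_def using orth_proj_sum_summands X by auto

lemma orth_proj_sum_comp_member:
  assumes k: "k < m"
  shows "orth_proj_sum \<cdot> t k = t k"
proof -
  note tk = orthogonal_cospan_arr[OF k]
  have "orth_proj_sum \<cdot> t k = msum (A k) X (map (\<lambda>j. proj_mor C (t j) \<cdot> t k) [0..<m])"
    unfolding orth_proj_sum_def using sum_comp[OF X _ _ orth_proj_sum_summands] tk by (simp add: o_def)
  also have "\<dots> = proj_mor C (t k) \<cdot> t k"
  proof (rule sum_map_single[OF _ X k])
    show "obj (A k)" using tk by (metis obj_dom_cod(1))
    fix j assume j: "j < m"
    show "proj_mor C (t j) \<cdot> t k \<in> hom C (A k) X"
      using proj_mor_props[OF closed[OF j]] orthogonal_cospan_arr[OF j] tk by (simp add: hom_iff)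
    assume "j \<noteq> k"
    then have "(t j)\<^sup>\<dagger> \<cdot> t k = zr (A k) (A j)"
      using orthogonal j k unfolding orthogonal_cospan_def by blast
    then show "proj_mor C (t j) \<cdot> t k = zr (A k) X"
      using proj_mor_comp_orthogonal[OF closed[OF j]] orthogonal_cospan_arr[OF j] tk by simp
  qed
  also have "\<dots> = t k" using proj_mor_props[OF closed[OF k]] by simp
  finally show ?thesis .
qed

text \<open>Every \<open>t\<^sub>k\<close> is fixed by \<open>orth_proj_sum\<close>, and so is its kernel complement \<open>u\<close>;
  hence \<open>u = \<Sum>\<^sub>j t\<^sub>j (pinv t\<^sub>j u)\<close> factors through every subobject containing all
  \<open>t\<^sub>j\<close>.\<close>

context
  fixes u
  assumes ku: "kernel C (one X \<ominus> orth_proj_sum) u"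
begin

lemma kernel_complement_arr: "arr u" "cod u = X"
  using kernelD[OF ku] orth_proj_sum_arr X by auto

lemma member_factors_through_kernel_complement:
  assumes k: "k < m"
  shows "factors_through u (t k)"
proof -
  note tk = orthogonal_cospan_arr[OF k] and P = orth_proj_sum_arr
  have "(one X \<ominus> orth_proj_sum) \<cdot> t k = one X \<cdot> t k \<ominus> orth_proj_sum \<cdot> t k"
    by (rule sub_comp) (use P X tk in auto)
  then have "(one X \<ominus> orth_proj_sum) \<cdot> t k = zr (dom (t k)) X"
    using orth_proj_sum_comp_member[OF k] tk by simp
  then obtain h where "arr h" "dom h = dom (t k)" "cod h = dom u" "u \<cdot> h = t k"
    using kernelD(5)[OF ku, of "t k"] tk P X by auto
  then show ?thesis by (rule factors_throughI)
qed

lemma orth_proj_sum_comp_kernel_complement: "orth_proj_sum \<cdot> u = u"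
proof -
  note P = orth_proj_sum_arr and u = kernel_complement_arr
  have "(one X \<ominus> orth_proj_sum) \<cdot> u = one X \<cdot> u \<ominus> orth_proj_sum \<cdot> u"
    by (rule sub_comp) (use P X u in auto)
  then have "u \<ominus> orth_proj_sum \<cdot> u = zr (dom u) X" using kernelD[OF ku] u P X by simp
  then show ?thesis using sub_eq_zero_imp_eq[of u "orth_proj_sum \<cdot> u"] u P by simp
qed

lemma kernel_complement_factors_through:
  assumes v: "arr v" "cod v = X" and fv: "\<And>k. k < m \<Longrightarrow> factors_through v (t k)"
  shows "factors_through v u"
proof -
  note u = kernel_complement_arr
  have "u = msum (dom u) (cod v) (map (\<lambda>j. proj_mor C (t j) \<cdot> u) [0..<m])"
    using orth_proj_sum_comp_kernel_complement sum_comp[OF X _ _ orth_proj_sum_summands] u v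
    unfolding orth_proj_sum_def by (simp add: o_def)
  also have "factors_through v \<dots>"
  proof (rule factors_through_sum[OF v(1)])
    show "obj (dom u)" using u by simp
    show "set (map (\<lambda>j. proj_mor C (t j) \<cdot> u) [0..<m]) \<subseteq> hom C (dom u) (cod v)"
      using proj_mor_props[OF closed] orthogonal_cospan_arr u v by (auto simp: hom_iff)
    fix f assume "f \<in> set (map (\<lambda>j. proj_mor C (t j) \<cdot> u) [0..<m])"
    then obtain j where j: "j < m" and f: "f = t j \<cdot> (pinv (t j) \<cdot> u)"
      using pinv_props[OF closed] orthogonal_cospan_arr u by (auto simp: proj_mor_eq comp_assoc)
    note tj = orthogonal_cospan_arr[OF j] and pj = pinv_props[OF closed[OF j]]
    show "factors_through v f"
      unfolding f by (rule factors_through_comp) (use v tj pj u fv[OF j] in auto)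
  qed
  finally show ?thesis .
qed

lemma kernel_complement_is_union: "isometry C u \<Longrightarrow> is_union C X m t u"
  using isometry_mono kernel_complement_arr orthogonal_cospan_arr
    member_factors_through_kernel_complement kernel_complement_factors_through
  by (intro is_unionI) auto

end

end

lemma orthogonal_closed_monos_union:
  assumes "obj X" "orthogonal_cospan C m A X t" "\<And>k. k < m \<Longrightarrow> closed_mono C (t k)"
  shows "\<exists>u. is_union C X m t u"
proof -
  have "arr (one X \<ominus> orth_proj_sum m X t)"
    using orth_proj_sum_arr[OF assms] assms(1) by simp
  then obtain u where "kernel C (one X \<ominus> orth_proj_sum m X t) u" "isometry C u"
    using isometric_kernel_exists by blast
  then show ?thesis using kernel_complement_is_union[OF assms] by blast
qed

end

section \<open>The Gram--Schmidt recursion\<close>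

lemma orthogonal_cospan_prefix:
  "orthogonal_cospan C n A X t \<Longrightarrow> m \<le> n \<Longrightarrow> orthogonal_cospan C m A X t"
  unfolding orthogonal_cospan_def wide_cospan_def by auto

lemma gs_list_eq_map: "gs_list C s m = map (gram_schmidt C s) [0..<Suc m]"
proof (induction m)
  case 0 then show ?case by (simp add: gram_schmidt_def)
next
  case (Suc m)
  obtain N where e: "gs_list C s (Suc m) = gs_list C s m @ [N]" by (simp add: Let_def)
  then have "gram_schmidt C s (Suc m) = N" by (simp add: gram_schmidt_def)
  then show ?case using e Suc.IH by simp
qed

lemma gram_schmidt_0: "gram_schmidt C s 0 = s 0" by (simp add: gram_schmidt_def)

lemma gram_schmidt_Suc:
  "gram_schmidt C s (Suc m) = sub_mor C (s (Suc m)) (sum_mor C (src C (s (Suc m))) (tgt C (s (Suc m)))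
     (map (\<lambda>j. comp C (proj_mor C (gram_schmidt C s j)) (s (Suc m))) [0..<Suc m]))"
proof -
  have "gram_schmidt C s (Suc m) = last (gs_list C s (Suc m))" by (simp only: gram_schmidt_def)
  also have "\<dots> = sub_mor C (s (Suc m)) (sum_mor C (src C (s (Suc m))) (tgt C (s (Suc m)))
     (map (\<lambda>t. comp C (proj_mor C t) (s (Suc m))) (gs_list C s m)))"
    unfolding gs_list.simps(2) Let_def by simp
  also have "\<dots> = sub_mor C (s (Suc m)) (sum_mor C (src C (s (Suc m))) (tgt C (s (Suc m)))
     (map (\<lambda>j. comp C (proj_mor C (gram_schmidt C s j)) (s (Suc m))) [0..<Suc m]))"
    unfolding gs_list_eq_map map_map o_def ..
  finally show ?thesis .
qed

context pre_hilbert_cat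
begin

context
  fixes n :: nat and A X and s r :: "nat \<Rightarrow> _"
  assumes X: "obj X"
    and s_hom: "\<And>k. k < n \<Longrightarrow> s k \<in> hom C (A k) X"
    and r_hom: "\<And>k. k < n \<Longrightarrow> r k \<in> hom C X (A k)"
    and r_s: "\<And>k j. k < n \<Longrightarrow> j < n \<Longrightarrow> r k \<cdot> s j = (if j = k then one (A k) else zr (A j) (A k))"
begin

abbreviation t where "t \<equiv> gram_schmidt C s"

definition gs_correction where
  "gs_correction k = msum (A k) X (map (\<lambda>j. proj_mor C (t j) \<cdot> s k) [0..<k])"

lemma s_arr: "k < n \<Longrightarrow> arr (s k)" "k < n \<Longrightarrow> dom (s k) = A k" "k < n \<Longrightarrow> cod (s k) = X"
  and r_arr: "k < n \<Longrightarrow> arr (r k)" "k < n \<Longrightarrow> dom (r k) = X" "k < n \<Longrightarrow> cod (r k) = A k"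
  using s_hom r_hom by (auto simp: hom_iff)

lemma obj_A: "k < n \<Longrightarrow> obj (A k)"
  using s_arr obj_dom_cod by metis

lemma gram_schmidt_eq:
  assumes "k < n"
  shows "t k = s k \<ominus> gs_correction k"
proof (cases k)
  case 0
  then show ?thesis using assms s_arr obj_A X by (simp add: gram_schmidt_0 gs_correction_def)
next
  case (Suc m)
  then show ?thesis using assms s_arr by (simp add: gram_schmidt_Suc gs_correction_def)
qed

definition gs_invariant where
  "gs_invariant k \<longleftrightarrow> t k \<in> hom C (A k) X \<and> closed_mono C (t k) \<and>
     (\<forall>j. k \<le> j \<and> j < n \<longrightarrow> r j \<cdot> t k = (if j = k then one (A k) else zr (A k) (A j))) \<and>
     (\<forall>i<k. (t i)\<^sup>\<dagger> \<cdot> t k = zr (A k) (A i))"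

context
  fixes k
  assumes k: "k < n" and IH: "\<And>j. j < k \<Longrightarrow> gs_invariant j"
begin

lemma gram_schmidt_before_arr:
  "j < k \<Longrightarrow> arr (t j)" "j < k \<Longrightarrow> dom (t j) = A j" "j < k \<Longrightarrow> cod (t j) = X"
  "j < k \<Longrightarrow> closed_mono C (t j)"
  using IH unfolding gs_invariant_def hom_iff by auto

lemma gs_correction_summands: "set (map (\<lambda>j. proj_mor C (t j) \<cdot> s k) [0..<k]) \<subseteq> hom C (A k) X"
  using proj_mor_props gram_schmidt_before_arr s_arr[OF k] by (auto simp: hom_iff)

lemma gs_correction_arr: "arr (gs_correction k)" "dom (gs_correction k) = A k" "cod (gs_correction k) = X"
  unfolding gs_correction_def using gs_correction_summands obj_A[OF k] X by auto

lemma comp_gs_correction_zero: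
  assumes h: "arr h" "dom h = X" and ann: "\<And>j. j < k \<Longrightarrow> h \<cdot> t j = zr (A j) (cod h)"
  shows "h \<cdot> gs_correction k = zr (A k) (cod h)"
proof -
  have "h \<cdot> gs_correction k = msum (A k) (cod h) (map (\<lambda>j. h \<cdot> (proj_mor C (t j) \<cdot> s k)) [0..<k])"
    unfolding gs_correction_def using comp_sum[OF obj_A[OF k] h gs_correction_summands] by (simp add: o_def)
  also have "\<dots> = zr (A k) (cod h)"
  proof (rule sum_zeros)
    show "obj (A k)" "obj (cod h)" using obj_A[OF k] h by auto
    fix f assume "f \<in> set (map (\<lambda>j. h \<cdot> (proj_mor C (t j) \<cdot> s k)) [0..<k])"
    then obtain j where j: "j < k" and f: "f = h \<cdot> (proj_mor C (t j) \<cdot> s k)" by auto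
    note tj = gram_schmidt_before_arr[OF j] and p = pinv_props[OF gram_schmidt_before_arr(4)[OF j]]
    have "f = (h \<cdot> t j) \<cdot> (pinv (t j) \<cdot> s k)"
      unfolding f proj_mor_eq using p tj h s_arr[OF k] by (simp add: comp_assoc)
    also have "\<dots> = zr (A k) (cod h)" using ann[OF j] p tj h s_arr[OF k] by simp
    finally show "f = zr (A k) (cod h)" .
  qed
  finally show ?thesis .
qed

lemma gram_schmidt_before_orthogonal:
  assumes i: "i < k" and j: "j < k" "j \<noteq> i"
  shows "(t i)\<^sup>\<dagger> \<cdot> t j = zr (A j) (A i)"
proof (cases "i < j")
  case True then show ?thesis using IH[OF j(1)] unfolding gs_invariant_def by auto
next
  case False
  then have "(t j)\<^sup>\<dagger> \<cdot> t i = zr (A i) (A j)" using IH[OF i] j unfolding gs_invariant_def by auto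
  then have "((t j)\<^sup>\<dagger> \<cdot> t i)\<^sup>\<dagger> = zr (A j) (A i)"
    using gram_schmidt_before_arr i j(1) by (metis dagger_zero obj_dom_cod)
  then show ?thesis using gram_schmidt_before_arr i j(1) by simp
qed

lemma dagger_comp_gs_correction:
  assumes i: "i < k"
  shows "(t i)\<^sup>\<dagger> \<cdot> gs_correction k = (t i)\<^sup>\<dagger> \<cdot> s k"
proof -
  note t_arr = gram_schmidt_before_arr
  have Ai: "obj (A i)" using t_arr[OF i] by (metis obj_dom_cod(1))
  define F where "F = (\<lambda>j. (t i)\<^sup>\<dagger> \<cdot> (proj_mor C (t j) \<cdot> s k))"
  have "(t i)\<^sup>\<dagger> \<cdot> gs_correction k = msum (A k) (A i) (map F [0..<k])"
    unfolding gs_correction_def F_def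
    using comp_sum[OF obj_A[OF k] _ _ gs_correction_summands, of "(t i)\<^sup>\<dagger>"] t_arr[OF i]
    by (simp add: o_def)
  also have "\<dots> = F i"
  proof (rule sum_map_single[OF obj_A[OF k] Ai i])
    fix j assume j: "j < k"
    note p = proj_mor_props[OF t_arr(4)[OF j]]
    show "F j \<in> hom C (A k) (A i)"
      unfolding F_def using p t_arr[OF j] t_arr[OF i] s_arr[OF k] by (simp add: hom_iff)
    assume "j \<noteq> i"
    note pj = pinv_props[OF t_arr(4)[OF j]]
    have "F j = ((t i)\<^sup>\<dagger> \<cdot> t j) \<cdot> (pinv (t j) \<cdot> s k)"
      unfolding F_def proj_mor_eq using pj t_arr[OF j] t_arr[OF i] s_arr[OF k] by (simp add: comp_assoc)
    also have "\<dots> = zr (A k) (A i)"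
      using gram_schmidt_before_orthogonal[OF i j \<open>j \<noteq> i\<close>] pj t_arr[OF j] s_arr[OF k] obj_A[OF k] Ai
      by simp
    finally show "F j = zr (A k) (A i)" .
  qed
  also have "F i = (t i)\<^sup>\<dagger> \<cdot> s k"
    using proj_mor_props[OF t_arr(4)[OF i]] t_arr[OF i] s_arr[OF k] unfolding F_def
    by (simp add: comp_assoc[symmetric])
  finally show ?thesis .
qed

lemma gs_invariant_step: "gs_invariant k"
proof -
  note corr = gs_correction_arr and sk = s_arr[OF k]
  have tk: "t k = s k \<ominus> gs_correction k" by (rule gram_schmidt_eq[OF k])
  have t_arr: "arr (t k)" "dom (t k) = A k" "cod (t k) = X" using tk sk corr by simp_all
  have retraction: "r j \<cdot> t k = (if j = k then one (A k) else zr (A k) (A j))"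
    if j: "k \<le> j" "j < n" for j
  proof -
    note rj = r_arr[OF j(2)]
    have "r j \<cdot> gs_correction k = zr (A k) (A j)"
      using comp_gs_correction_zero[of "r j"] rj IH j unfolding gs_invariant_def by auto
    moreover have "r j \<cdot> t k = r j \<cdot> s k \<ominus> r j \<cdot> gs_correction k"
      unfolding tk by (rule comp_sub) (use sk corr rj in auto)
    ultimately show ?thesis using r_s[OF j(2) k] rj obj_A[OF k] obj_A[OF j(2)] by simp
  qed
  have "closed_mono C (t k)"
    using split_mono_closed_mono[of "t k" "r k"] t_arr r_arr[OF k] retraction[of k] k by simp
  moreover have "(t i)\<^sup>\<dagger> \<cdot> t k = zr (A k) (A i)" if i: "i < k" for i
  proof -
    note ti = gram_schmidt_before_arr[OF i]
    have "(t i)\<^sup>\<dagger> \<cdot> t k = (t i)\<^sup>\<dagger> \<cdot> s k \<ominus> (t i)\<^sup>\<dagger> \<cdot> gs_correction k"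
      unfolding tk by (rule comp_sub) (use sk corr ti in auto)
    then show ?thesis
      using dagger_comp_gs_correction[OF i] sk ti by simp
  qed
  ultimately show ?thesis
    unfolding gs_invariant_def using t_arr retraction by (auto simp: hom_iff)
qed

end

lemma gs_invariant: "k < n \<Longrightarrow> gs_invariant k"
proof (induction k rule: less_induct)
  case (less k)
  have "gs_invariant j" if "j < k" for j
    using less.IH[OF that] that less.prems by simp
  then show ?case by (rule gs_invariant_step[OF less.prems])
qed

lemma gram_schmidt_hom: "k < n \<Longrightarrow> t k \<in> hom C (A k) X"
  and gram_schmidt_closed_mono: "k < n \<Longrightarrow> closed_mono C (t k)"
  using gs_invariant unfolding gs_invariant_def by blast+

lemma gram_schmidt_arr:
  "k < n \<Longrightarrow> arr (t k)" "k < n \<Longrightarrow> dom (t k) = A k" "k < n \<Longrightarrow> cod (t k) = X"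
  using gram_schmidt_hom by (simp_all add: hom_iff)

lemma gram_schmidt_orthogonal: "orthogonal_cospan C n A X t"
  unfolding orthogonal_cospan_def wide_cospan_def
proof (intro conjI allI impI)
  show "t k \<in> hom C (A k) X" if "k < n" for k using gram_schmidt_hom that .
  fix j k assume j: "j < n" and k: "k < n" and "j \<noteq> k"
  then consider "j < k" | "k < j" by linarith
  then show "(t j)\<^sup>\<dagger> \<cdot> t k = zr (A k) (A j)"
  proof cases
    case 1 then show ?thesis using gs_invariant[OF k] unfolding gs_invariant_def by blast
  next
    case 2
    then have "(t k)\<^sup>\<dagger> \<cdot> t j = zr (A j) (A k)" using gs_invariant[OF j] unfolding gs_invariant_def by blast
    then have "((t k)\<^sup>\<dagger> \<cdot> t j)\<^sup>\<dagger> = zr (A k) (A j)"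
      using gram_schmidt_arr j k by (metis dagger_zero obj_dom_cod(1))
    then show ?thesis using gram_schmidt_arr j k by simp
  qed
qed

lemma factors_through_gs_correction:
  assumes v: "arr v" "cod v = X" and k: "k < n" and ft: "\<And>j. j < k \<Longrightarrow> factors_through v (t j)"
  shows "factors_through v (gs_correction k)"
proof -
  have IH: "\<And>j. j < k \<Longrightarrow> gs_invariant j" using gs_invariant k by simp
  have "factors_through v (msum (A k) (cod v) (map (\<lambda>j. proj_mor C (t j) \<cdot> s k) [0..<k]))"
  proof (rule factors_through_sum[OF v(1) obj_A[OF k]])
    show "set (map (\<lambda>j. proj_mor C (t j) \<cdot> s k) [0..<k]) \<subseteq> hom C (A k) (cod v)"
      using gs_correction_summands[OF k IH] v by simp
    fix f assume "f \<in> set (map (\<lambda>j. proj_mor C (t j) \<cdot> s k) [0..<k])"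
    then obtain j where j: "j < k" and f: "f = proj_mor C (t j) \<cdot> s k" by auto
    have jn: "j < n" using j k by simp
    note tj = gram_schmidt_arr[OF jn] and pj = pinv_props[OF gram_schmidt_closed_mono[OF jn]]
    have "f = t j \<cdot> (pinv (t j) \<cdot> s k)"
      unfolding f proj_mor_eq using pj tj s_arr[OF k] by (simp add: comp_assoc)
    also have "factors_through v \<dots>"
      by (rule factors_through_comp) (use v tj pj s_arr[OF k] ft[OF j] in auto)
    finally show "factors_through v f" .
  qed
  then show ?thesis unfolding gs_correction_def using v by simp
qed

lemma factors_through_gram_schmidt_iff:
  assumes v: "arr v" "cod v = X" and m: "m \<le> n"
  shows "(\<forall>j<m. factors_through v (t j)) \<longleftrightarrow> (\<forall>j<m. factors_through v (s j))"
proof (intro iffI allI impI)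
  fix j assume ft: "\<forall>j<m. factors_through v (t j)" and j: "j < m"
  have jn: "j < n" using j m by simp
  have IH: "\<And>i. i < j \<Longrightarrow> gs_invariant i" using gs_invariant jn by simp
  note corr = gs_correction_arr[OF jn IH] and tj = gram_schmidt_arr[OF jn]
  have "factors_through v (gs_correction j)"
    using factors_through_gs_correction[OF v jn] ft j by simp
  then have "factors_through v (t j \<oplus> gs_correction j)"
    using factors_through_add[OF v(1) tj(1) corr(1)] tj corr v ft j by simp
  moreover have "s j = t j \<oplus> gs_correction j"
    using gram_schmidt_eq[OF jn] sub_add_cancel[of "s j" "gs_correction j"] s_arr[OF jn] corr by simp
  ultimately show "factors_through v (s j)" by simp
next
  fix j assume fs: "\<forall>j<m. factors_through v (s j)" and "j < m"
  then show "factors_through v (t j)"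
  proof (induction j rule: less_induct)
    case (less j)
    have jn: "j < n" using less.prems m by simp
    have IH: "\<And>i. i < j \<Longrightarrow> gs_invariant i" using gs_invariant jn by simp
    note corr = gs_correction_arr[OF jn IH] and sj = s_arr[OF jn]
    have "factors_through v (gs_correction j)"
      using factors_through_gs_correction[OF v jn] less by simp
    then have "factors_through v (s j \<ominus> gs_correction j)"
      using factors_through_sub[OF v(1) sj(1) corr(1)] sj corr v fs less.prems by simp
    then show ?case using gram_schmidt_eq[OF jn] by simp
  qed
qed

lemma gram_schmidt_union:
  assumes m: "m \<le> n"
  shows "\<exists>u. is_union C X m t u \<and> is_union C X m s u"
proof -
  obtain u where u: "is_union C X m t u"
    using orthogonal_closed_monos_union[OF X orthogonal_cospan_prefix[OF gram_schmidt_orthogonal m]]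
      gram_schmidt_closed_mono m by fastforce
  have "is_union C X m s u \<longleftrightarrow> is_union C X m t u"
    by (rule is_union_cong)
      (use s_arr gram_schmidt_arr m factors_through_gram_schmidt_iff[OF _ _ m] in auto)
  with u show ?thesis by blast
qed

end

end

lemma pre_hilbert_cat_if_pre_hilbert: "pre_hilbert C \<Longrightarrow> pre_hilbert_cat C"
  unfolding pre_hilbert_def pre_hilbert_cat_def pre_hilbert_cat_axioms_def star_cat_def
    semiadditive_star_cat_def semiadditive_star_cat_axioms_def
  by blast

theorem proposition4p4:
  fixes C :: "('o, 'm) starcat" and n :: nat and A :: "nat \<Rightarrow> 'o" and X :: 'o
    and s :: "nat \<Rightarrow> 'm"
  assumes "pre_hilbert C"
    and "X \<in> Obj C"
    and "split_cospan C n A X s"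
  shows "orthogonal_cospan C n A X (gram_schmidt C s)
    \<and> (\<forall>k<n. closed_mono C (gram_schmidt C s k))
    \<and> (\<forall>m. 1 \<le> m \<and> m \<le> n \<longrightarrow>
          (\<exists>u. is_union C X m (gram_schmidt C s) u \<and> is_union C X m s u))"
proof -
  interpret pre_hilbert_cat C by (rule pre_hilbert_cat_if_pre_hilbert[OF assms(1)])
  obtain r where s: "\<And>k. k < n \<Longrightarrow> s k \<in> hom C (A k) X"
    and r: "\<And>k. k < n \<Longrightarrow> r k \<in> hom C X (A k)"
    and rs: "\<And>k j. k < n \<Longrightarrow> j < n \<Longrightarrow> r k \<cdot> s j = (if j = k then one (A k) else zr (A j) (A k))"
    using assms(3) unfolding split_cospan_def wide_cospan_def by blast
  note gs = assms(2) s r rs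
  show ?thesis
    using gram_schmidt_orthogonal[OF gs] gram_schmidt_closed_mono[OF gs] gram_schmidt_union[OF gs]
    by blast
qed

end
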